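(* Let $G$ be a topological gyrogroup. Then the map $i_G:G\to G^{\bullet}$, $i_G(x)=x^{\bullet}$ where $x^{\bullet}(r)=x$ for all $r\in J$, is an injective groupoid homomorphism which is a homeomorphism onto its image, and $i_G(G)$ is a closed subgyrogroup of the pathwise connected, locally pathwise connected topological gyrogroup $G^{\bullet}$.
   Context: A gyrogroup is a set $G$ with a binary operation $\oplus$ such that: (G1) there is a unique identity $0$ with $0\oplus a=a=a\oplus 0$; (G2) each $x$ has a unique inverse $\ominus x$ with $\ominus x\oplus x=0=x\oplus(\ominus x)$; (G3) for all $x,y$ there is an automorphism $\mathrm{gyr}[x,y]$ of $(G,\oplus)$ with $x\oplus(y\oplus z)=(x\oplus y)\oplus \mathrm{gyr}[x,y](z)$ for all $z$; (G4) $\mathrm{gyr}[x\oplus y,y]=\mathrm{gyr}[x,y]$. A topological gyrogroup is a gyrogroup with a topology (all spaces are assumed $T_1$) such that $\oplus$ is jointly continuous and $x\mapsto\ominus x$ is continuous. A subgyrogroup of $G$ is a nonempty $H\subseteq G$ that is a gyrogroup under the inherited operation and such that for all $a,b\in H$ the restriction of $\mathrm{gyr}[a,b]$ to $H$ is an automorphism of $H$. A groupoid homomorphism is a map $\varphi$ with $\varphi(x\oplus y)=\varphi(x)\oplus\varphi(y)$. Construction: let $J=[0,1)$ and let $G^{\bullet}$ be the set of all functions $f:J\to G$ for which there exist $0=a_0<a_1<\dots<a_n=1$ with $f$ constant on each $[a_k,a_{k+1})$, with pointwise operation $(f\oplus^{\bullet}g)(r)=f(r)\oplus g(r)$ (a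 gyrogroup with identity $\mathbf{0}^{\bullet}\equiv0$). For an open neighbourhood $V$ of $0$ in $G$ and $\varepsilon>0$ let $O(V,\varepsilon)=\{f\in G^{\bullet}:\mu(\{r\in J: f(r)\notin V\})<\varepsilon\}$, $\mu$ Lebesgue measure. $G^{\bullet}$ carries the (Hausdorff) topological gyrogroup topology in which the sets $f\oplus^{\bullet}O(V,\varepsilon)$ form a local base at each $f\in G^{\bullet}$. *)

theory Defs
  imports "HOL-Analysis.Analysis"
begin

definition gzero :: "'a set \<Rightarrow> ('a \<Rightarrow> 'a \<Rightarrow> 'a) \<Rightarrow> 'a" where
  "gzero G op = (THE e. e \<in> G \<and> (\<forall>a\<in>G. op e a = a \<and> op a e = a))"

definition ginv :: "'a set \<Rightarrow> ('a \<Rightarrow> 'a \<Rightarrow> 'a) \<Rightarrow> 'a \<Rightarrow> 'a" where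
  "ginv G op x = (THE y. y \<in> G \<and> op y x = gzero G op \<and> op x y = gzero G op)"

definition gyro_automorphism :: "'a set \<Rightarrow> ('a \<Rightarrow> 'a \<Rightarrow> 'a) \<Rightarrow> ('a \<Rightarrow> 'a) \<Rightarrow> bool" where
  "gyro_automorphism G op h \<longleftrightarrow>
     bij_betw h G G \<and> (\<forall>a\<in>G. \<forall>b\<in>G. h (op a b) = op (h a) (h b))"

definition gyrogroup_with :: "'a set \<Rightarrow> ('a \<Rightarrow> 'a \<Rightarrow> 'a) \<Rightarrow> ('a \<Rightarrow> 'a \<Rightarrow> 'a \<Rightarrow> 'a) \<Rightarrow> bool" where
  "gyrogroup_with G op gyr \<longleftrightarrow>
     (\<forall>x\<in>G. \<forall>y\<in>G. op x y \<in> G) \<and>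
     (\<exists>!e. e \<in> G \<and> (\<forall>a\<in>G. op e a = a \<and> op a e = a)) \<and>
     (\<forall>x\<in>G. \<exists>!y. y \<in> G \<and> op y x = gzero G op \<and> op x y = gzero G op) \<and>
     (\<forall>x\<in>G. \<forall>y\<in>G. gyro_automorphism G op (gyr x y)) \<and>
     (\<forall>x\<in>G. \<forall>y\<in>G. \<forall>z\<in>G. op x (op y z) = op (op x y) (gyr x y z)) \<and>
     (\<forall>x\<in>G. \<forall>y\<in>G. \<forall>z\<in>G. gyr (op x y) y z = gyr x y z)"

definition gyrogroup :: "'a set \<Rightarrow> ('a \<Rightarrow> 'a \<Rightarrow> 'a) \<Rightarrow> bool" where
  "gyrogroup G op \<longleftrightarrow> (\<exists>gyr. gyrogroup_with G op gyr)"

text \<open>Subgyrogroup: nonempty subset, gyrogroup under the inherited operation,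
  and the gyroautomorphisms gyr[a,b] (a,b in H) of G restrict to automorphisms of H.
  (The gyroautomorphisms of a gyrogroup are uniquely determined by (G3) by left
  cancellation; we quantify over all witnessing families.)\<close>
definition subgyrogroup :: "'a set \<Rightarrow> 'a set \<Rightarrow> ('a \<Rightarrow> 'a \<Rightarrow> 'a) \<Rightarrow> bool" where
  "subgyrogroup H G op \<longleftrightarrow>
     H \<noteq> {} \<and> H \<subseteq> G \<and> gyrogroup H op \<and>
     (\<forall>gyr. gyrogroup_with G op gyr \<longrightarrow>
        (\<forall>a\<in>H. \<forall>b\<in>H. gyro_automorphism H op (gyr a b)))"

definition topological_gyrogroup :: "'a set \<Rightarrow> ('a \<Rightarrow> 'a \<Rightarrow> 'a) \<Rightarrow> 'a topology \<Rightarrow> bool" where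
  "topological_gyrogroup G op X \<longleftrightarrow>
     gyrogroup G op \<and> topspace X = G \<and> t1_space X \<and>
     continuous_map (prod_topology X X) X (\<lambda>p. op (fst p) (snd p)) \<and>
     continuous_map X X (ginv G op)"

abbreviation J :: "real set" where "J \<equiv> {0..<1}"

definition bullet_carrier :: "'a set \<Rightarrow> (real \<Rightarrow> 'a) set" where
  "bullet_carrier G = {f. (\<forall>r. r \<notin> J \<longrightarrow> f r = undefined) \<and> (\<forall>r\<in>J. f r \<in> G) \<and>
      (\<exists>(a::nat \<Rightarrow> real) n. a 0 = 0 \<and> a n = 1 \<and> (\<forall>k<n. a k < a (Suc k)) \<and>
         (\<forall>k<n. \<forall>r\<in>{a k..<a (Suc k)}. f r = f (a k)))}"

definition bullet_op :: "('a \<Rightarrow> 'a \<Rightarrow> 'a) \<Rightarrow> (real \<Rightarrow> 'a) \<Rightarrow> (real \<Rightarrow> 'a) \<Rightarrow> (real \<Rightarrow> 'a)" where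
  "bullet_op op f g = (\<lambda>r. if r \<in> J then op (f r) (g r) else undefined)"

definition bullet_O :: "'a set \<Rightarrow> ('a \<Rightarrow> 'a \<Rightarrow> 'a) \<Rightarrow> 'a set \<Rightarrow> real \<Rightarrow> (real \<Rightarrow> 'a) set" where
  "bullet_O G op V \<epsilon> = {f \<in> bullet_carrier G. measure lebesgue {r \<in> J. f r \<notin> V} < \<epsilon>}"

definition bullet_topology :: "'a set \<Rightarrow> ('a \<Rightarrow> 'a \<Rightarrow> 'a) \<Rightarrow> 'a topology \<Rightarrow> (real \<Rightarrow> 'a) topology" where
  "bullet_topology G op X = topology (\<lambda>U. U \<subseteq> bullet_carrier G \<and>
     (\<forall>f\<in>U. \<exists>V \<epsilon>. openin X V \<and> gzero G op \<in> V \<and> \<epsilon> > 0 \<and>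
        bullet_op op f ` bullet_O G op V \<epsilon> \<subseteq> U))"

definition const_bullet :: "'a \<Rightarrow> (real \<Rightarrow> 'a)" where
  "const_bullet x = (\<lambda>r. if r \<in> J then x else undefined)"

end

theory Submission
  imports Defs
begin

text \<open>Everything in the construction is pointwise: step functions J \<rightarrow> G are compared and combined
  value by value, so the gyrogroup axioms, the homomorphism property and injectivity of
  x \<mapsto> x\<bullet> transfer directly from G. A function k lies in f \<oplus> O(V,\<epsilon>) iff \<ominus>f \<oplus> k lies in V
  off a set of measure < \<epsilon>. Since a step function has only finitely many values, continuity of
  the operations of G at finitely many points yields one neighbourhood V' of \<zero> that works along
  the whole function; with the usual \<epsilon>/2 splitting of exceptional sets this shows that the basic
  sets are neighbourhoods and that \<oplus> and \<ominus> are continuous on G\<bullet>. Truncations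
  t \<mapsto> f \<oplus> u\<restriction>[0,t) (with value \<zero> on [t,1)) are paths inside every basic set, giving path
  connectedness and local path connectedness. The constants are closed because a non-constant step
  function takes two distinct values on intervals of positive length, and a constant function
  close to it would have to be close to both values.\<close>

section \<open>Step functions on [0,1)\<close>

text \<open>A step function is given by a finite set D of jump points: f is constant on [r,s] unless D
  meets (r,s]. Unlike partitions, jump sets of several step functions can simply be united.\<close>

definition step_function :: "(real \<Rightarrow> 'b) \<Rightarrow> bool" where
  "step_function f \<longleftrightarrow>
     (\<exists>D. finite D \<and> (\<forall>r s. 0 \<le> r \<and> r \<le> s \<and> s < 1 \<and> D \<inter> {r<..s} = {} \<longrightarrow> f r = f s))"

definition unit_partition :: "(nat \<Rightarrow> real) \<Rightarrow> nat \<Rightarrow> bool" where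
  "unit_partition a n \<longleftrightarrow> a 0 = 0 \<and> a n = 1 \<and> (\<forall>k<n. a k < a (Suc k))"

lemma unit_partition_mono:
  assumes "unit_partition a n" "j \<le> k" "k \<le> n"
  shows "a j \<le> a k"
  using assms(2,3)
proof (induction k)
  case (Suc k)
  show ?case
  proof (cases "j = Suc k")
    case False
    then have "a j \<le> a k"
      using Suc by simp
    also have "\<dots> < a (Suc k)"
      using assms(1) Suc.prems by (simp add: unit_partition_def)
    finally show ?thesis
      by simp
  qed simp
qed simp

lemma unit_partition_cover:
  assumes "unit_partition a n" "r \<in> J"
  shows "\<exists>k<n. a k \<le> r \<and> r < a (Suc k)"
proof -
  have "m \<le> n \<Longrightarrow> r < a m \<Longrightarrow> \<exists>k<m. a k \<le> r \<and> r < a (Suc k)" for m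
  proof (induction m)
    case (Suc m)
    show ?case
    proof (cases "r < a m")
      case True
      then show ?thesis
        using Suc by (metis Suc_leD less_SucI)
    next
      case False
      then show ?thesis
        using Suc by auto
    qed
  qed (use assms in \<open>simp add: unit_partition_def\<close>)
  then show ?thesis
    using assms by (simp add: unit_partition_def)
qed

lemma step_function_if_partition:
  assumes "unit_partition a n" "\<forall>k<n. \<forall>r\<in>{a k..<a (Suc k)}. f r = f (a k)"
  shows "step_function f"
  unfolding step_function_def
proof (intro exI[of _ "a ` {..n}"] conjI allI impI)
  fix r s :: real
  assume "0 \<le> r \<and> r \<le> s \<and> s < 1 \<and> a ` {..n} \<inter> {r<..s} = {}"
  then have rs: "0 \<le> r" "r \<le> s" "s < 1" and jumps: "a ` {..n} \<inter> {r<..s} = {}"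
    by blast+
  obtain k where k: "k < n" "a k \<le> r" "r < a (Suc k)"
    using unit_partition_cover[OF assms(1), of r] rs by force
  have "s < a (Suc k)"
  proof (rule ccontr)
    assume "\<not> s < a (Suc k)"
    then have "a (Suc k) \<in> a ` {..n} \<inter> {r<..s}"
      using k by simp
    then show False
      using jumps by blast
  qed
  then have "r \<in> {a k..<a (Suc k)}" "s \<in> {a k..<a (Suc k)}"
    using k rs by auto
  then show "f r = f s"
    using assms(2) k(1) by metis
qed simp

lemma partition_if_step_function:
  assumes "step_function f"
  obtains a n where "unit_partition a n" "\<forall>k<n. \<forall>r\<in>{a k..<a (Suc k)}. f r = f (a k)"
proof -
  obtain D where D: "finite D"
    "\<And>r s. 0 \<le> r \<Longrightarrow> r \<le> s \<Longrightarrow> s < 1 \<Longrightarrow> D \<inter> {r<..s} = {} \<Longrightarrow> f r = f s"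
    using assms unfolding step_function_def by blast
  define P where "P = {0, 1::real} \<union> (D \<inter> {0<..<1})"
  define L where "L = sorted_list_of_set P"
  define n where "n = length L - 1"
  have "finite P"
    using D(1) by (simp add: P_def)
  then have setL: "set L = P" and sorted: "sorted_wrt (<) L"
    by (simp_all add: L_def strict_sorted_list_of_set)
  have P01: "x \<in> P \<Longrightarrow> 0 \<le> x \<and> x \<le> 1" for x
    by (auto simp: P_def)
  have "card {0::real, 1} \<le> card P"
    using \<open>finite P\<close> by (intro card_mono) (auto simp: P_def)
  then have "length L \<ge> 2"
    using \<open>finite P\<close> by (simp add: L_def)
  then have n: "Suc n = length L"
    by (simp add: n_def)
  have nth_P: "k \<le> n \<Longrightarrow> L ! k \<in> P" for k
    using n setL nth_mem[of k L] by simp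
  have mono: "j \<le> k \<Longrightarrow> k \<le> n \<Longrightarrow> L ! j \<le> L ! k" for j k
    using sorted_nth_mono[of L j k] n strict_sorted_imp_sorted[OF sorted] by simp
  have index: "x \<in> P \<Longrightarrow> \<exists>j\<le>n. L ! j = x" for x
    unfolding setL[symmetric] in_set_conv_nth n[symmetric] by (auto simp: less_Suc_eq_le)
  have bounds: "k \<le> n \<Longrightarrow> 0 \<le> L ! k \<and> L ! k \<le> 1" for k
    using nth_P P01 by blast
  have "unit_partition ((!) L) n"
    unfolding unit_partition_def
  proof (intro conjI allI impI)
    obtain j k where "j \<le> n" "L ! j = 0" "k \<le> n" "L ! k = 1"
      using index[of 0] index[of 1] by (auto simp: P_def)
    then show "L ! 0 = 0" "L ! n = 1"
      using mono[of 0 j] mono[of k n] bounds[of 0] bounds[of n] by auto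
    show "k < n \<Longrightarrow> L ! k < L ! Suc k" for k
      using sorted_wrt_nth_less[OF sorted] n by simp
  qed
  moreover have "\<forall>k<n. \<forall>r\<in>{L ! k..<L ! Suc k}. f r = f (L ! k)"
  proof (intro allI impI ballI)
    fix k r
    assume k: "k < n" and r: "r \<in> {L ! k..<L ! Suc k}"
    have Lk: "0 \<le> L ! k" "L ! Suc k \<le> 1"
      using bounds[of k] bounds[of "Suc k"] k by auto
    have "D \<inter> {L ! k<..r} = {}"
    proof (rule ccontr)
      assume "D \<inter> {L ! k<..r} \<noteq> {}"
      then obtain d where d: "d \<in> D" "L ! k < d" "d \<le> r"
        by auto
      then have "d \<in> P"
        using r Lk by (simp add: P_def)
      then obtain j where "j \<le> n" "L ! j = d"
        using index by blast
      then show False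
        using d r mono[of j k] mono[of "Suc k" j] k by (cases "j \<le> k") auto
    qed
    then show "f r = f (L ! k)"
      using D(2)[of "L ! k" r] r Lk by simp
  qed
  ultimately show thesis
    by (rule that)
qed

lemma step_function_compose:
  assumes "step_function f"
  shows "step_function (\<lambda>r. F (f r))"
proof -
  obtain D where "finite D"
    and D: "\<And>r s. 0 \<le> r \<Longrightarrow> r \<le> s \<Longrightarrow> s < 1 \<Longrightarrow> D \<inter> {r<..s} = {} \<Longrightarrow> f r = f s"
    using assms unfolding step_function_def by blast
  have "F (f r) = F (f s)" if "0 \<le> r" "r \<le> s" "s < 1" "D \<inter> {r<..s} = {}" for r s
    using D[OF that] by simp
  then show ?thesis
    unfolding step_function_def using \<open>finite D\<close> by blast
qed

lemma step_function_pair: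
  assumes "step_function f" "step_function g"
  shows "step_function (\<lambda>r. (f r, g r))"
proof -
  obtain D where "finite D"
    and D: "\<And>r s. 0 \<le> r \<Longrightarrow> r \<le> s \<Longrightarrow> s < 1 \<Longrightarrow> D \<inter> {r<..s} = {} \<Longrightarrow> f r = f s"
    using assms(1) unfolding step_function_def by blast
  obtain E where "finite E"
    and E: "\<And>r s. 0 \<le> r \<Longrightarrow> r \<le> s \<Longrightarrow> s < 1 \<Longrightarrow> E \<inter> {r<..s} = {} \<Longrightarrow> g r = g s"
    using assms(2) unfolding step_function_def by blast
  have "(f r, g r) = (f s, g s)"
    if "0 \<le> r" "r \<le> s" "s < 1" "(D \<union> E) \<inter> {r<..s} = {}" for r s
  proof -
    have "D \<inter> {r<..s} = {}" "E \<inter> {r<..s} = {}"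
      using that(4) by blast+
    then have "f r = f s" "g r = g s"
      using D[OF that(1-3)] E[OF that(1-3)] by blast+
    then show ?thesis
      by simp
  qed
  then show ?thesis
    unfolding step_function_def using \<open>finite D\<close> \<open>finite E\<close> by blast
qed

lemma step_function_const: "step_function (\<lambda>r. c)"
  unfolding step_function_def by blast

lemma step_function_cong:
  assumes "step_function f" "\<And>r. r \<in> J \<Longrightarrow> f r = g r"
  shows "step_function g"
proof -
  obtain D where "finite D"
    and D: "\<And>r s. 0 \<le> r \<Longrightarrow> r \<le> s \<Longrightarrow> s < 1 \<Longrightarrow> D \<inter> {r<..s} = {} \<Longrightarrow> f r = f s"
    using assms(1) unfolding step_function_def by blast
  have "g r = g s" if "0 \<le> r" "r \<le> s" "s < 1" "D \<inter> {r<..s} = {}" for r s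
    using D[OF that] assms(2)[of r] assms(2)[of s] that by simp
  then show ?thesis
    unfolding step_function_def using \<open>finite D\<close> by blast
qed

lemma step_function_truncate:
  assumes "step_function f"
  shows "step_function (\<lambda>r. if r < t then f r else c)"
proof -
  obtain D where "finite D"
    and D: "\<And>r s. 0 \<le> r \<Longrightarrow> r \<le> s \<Longrightarrow> s < 1 \<Longrightarrow> D \<inter> {r<..s} = {} \<Longrightarrow> f r = f s"
    using assms unfolding step_function_def by blast
  have "(if r < t then f r else c) = (if s < t then f s else c)"
    if "0 \<le> r" "r \<le> s" "s < 1" "insert t D \<inter> {r<..s} = {}" for r s
  proof -
    have "(r < t) = (s < t)"
      using that by auto
    then show ?thesis
      using D[of r s] that by auto
  qed
  then show ?thesis
    unfolding step_function_def using \<open>finite D\<close> by blast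
qed

lemma step_function_right_constant:
  assumes "step_function f" "r\<^sub>0 \<in> J"
  obtains t where "r\<^sub>0 < t" "t \<le> 1" "\<forall>r\<in>{r\<^sub>0..<t}. f r = f r\<^sub>0"
proof -
  obtain D where D: "finite D"
    "\<And>r s. 0 \<le> r \<Longrightarrow> r \<le> s \<Longrightarrow> s < 1 \<Longrightarrow> D \<inter> {r<..s} = {} \<Longrightarrow> f r = f s"
    using assms(1) unfolding step_function_def by blast
  define t where "t = Min (insert 1 {d\<in>D. r\<^sub>0 < d})"
  have fin: "finite (insert 1 {d\<in>D. r\<^sub>0 < d})"
    using D(1) by simp
  have "r\<^sub>0 < t" "t \<le> 1"
    using Min_in[OF fin] Min_le[OF fin] assms(2) by (auto simp: t_def)
  moreover have "f r = f r\<^sub>0" if "r \<in> {r\<^sub>0..<t}" for r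
  proof -
    have "D \<inter> {r\<^sub>0<..r} = {}"
      using that Min_le[OF fin] by (force simp: t_def)
    then show ?thesis
      using D(2)[of r\<^sub>0 r] that assms(2) \<open>t \<le> 1\<close> by auto
  qed
  ultimately show thesis
    using that by blast
qed

lemma step_function_level_set_lmeasurable:
  assumes "step_function f"
  shows "{r\<in>J. P (f r)} \<in> lmeasurable"
proof -
  obtain a n where a: "unit_partition a n" "\<forall>k<n. \<forall>r\<in>{a k..<a (Suc k)}. f r = f (a k)"
    using partition_if_step_function[OF assms] by blast
  have level_set: "{r\<in>J. P (f r)} = (\<Union>k\<in>{k. k < n \<and> P (f (a k))}. {a k..<a (Suc k)})"
  proof (intro equalityI subsetI)
    fix r
    assume r: "r \<in> {r\<in>J. P (f r)}"
    then have "r \<in> J"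
      by simp
    then obtain k where "k < n" "a k \<le> r" "r < a (Suc k)"
      using unit_partition_cover[OF a(1)] by auto
    moreover from this have "f r = f (a k)"
      using a(2)[rule_format, of k r] by simp
    ultimately show "r \<in> (\<Union>k\<in>{k. k < n \<and> P (f (a k))}. {a k..<a (Suc k)})"
      using r by auto
  next
    fix r
    assume "r \<in> (\<Union>k\<in>{k. k < n \<and> P (f (a k))}. {a k..<a (Suc k)})"
    then obtain k where k: "k < n" "P (f (a k))" "a k \<le> r" "r < a (Suc k)"
      by auto
    then have "f r = f (a k)"
      using a(2)[rule_format, of k r] by simp
    moreover have "0 \<le> a k" "a (Suc k) \<le> 1"
      using unit_partition_mono[OF a(1), of 0 k] unit_partition_mono[OF a(1), of "Suc k" n]
        a(1) k(1) by (auto simp: unit_partition_def)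
    ultimately show "r \<in> {r\<in>J. P (f r)}"
      using k by auto
  qed
  have "bounded {r\<in>J. P (f r)}"
    by (rule bounded_subset[of "{0..1}"]) auto
  moreover have "{r\<in>J. P (f r)} \<in> sets lebesgue"
    unfolding level_set by (rule sets.finite_UN) auto
  ultimately show ?thesis
    by (rule bounded_set_imp_lmeasurable)
qed

lemma measure_exceptional_set_less:
  assumes "{r\<in>J. \<not> P r} \<in> lmeasurable"
    and "{r\<in>J. \<not> Q r} \<in> lmeasurable" "{r\<in>J. \<not> R r} \<in> lmeasurable"
    and "\<And>r. r \<in> J \<Longrightarrow> Q r \<Longrightarrow> R r \<Longrightarrow> P r"
    and "measure lebesgue {r\<in>J. \<not> Q r} < \<epsilon> / 2" "measure lebesgue {r\<in>J. \<not> R r} < \<epsilon> / 2"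
  shows "measure lebesgue {r\<in>J. \<not> P r} < \<epsilon>"
proof -
  have "{r\<in>J. \<not> P r} \<subseteq> {r\<in>J. \<not> Q r} \<union> {r\<in>J. \<not> R r}"
    using assms(4) by blast
  then have "measure lebesgue {r\<in>J. \<not> P r} \<le> measure lebesgue ({r\<in>J. \<not> Q r} \<union> {r\<in>J. \<not> R r})"
    using assms(1-3) by (intro measure_mono_fmeasurable) auto
  also have "\<dots> \<le> measure lebesgue {r\<in>J. \<not> Q r} + measure lebesgue {r\<in>J. \<not> R r}"
    using assms(2,3) by (intro measure_Un_le) auto
  finally show ?thesis
    using assms(5,6) by linarith
qed

lemma exists_in_interval_if_exceptional_set_small:
  assumes "{r\<in>J. \<not> P r} \<in> lmeasurable" "measure lebesgue {r\<in>J. \<not> P r} < t - s" "{s..<t} \<subseteq> J"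
  shows "\<exists>r\<in>{s..<t}. P r"
proof (rule ccontr)
  assume "\<not> (\<exists>r\<in>{s..<t}. P r)"
  then have "{s..<t} \<subseteq> {r\<in>J. \<not> P r}"
    using assms(3) by blast
  then have "measure lebesgue {s..<t} \<le> measure lebesgue {r\<in>J. \<not> P r}"
    using assms(1) by (intro measure_mono_fmeasurable) auto
  moreover have "s \<le> t"
    using assms(2) measure_nonneg[of lebesgue "{r\<in>J. \<not> P r}"] by linarith
  ultimately show False
    using assms(2) by simp
qed

lemma bullet_carrier_iff:
  "f \<in> bullet_carrier A \<longleftrightarrow>
     (\<forall>r. r \<notin> J \<longrightarrow> f r = undefined) \<and> (\<forall>r\<in>J. f r \<in> A) \<and> step_function f"
proof
  assume "f \<in> bullet_carrier A"
  then obtain a n where "unit_partition a n" "\<forall>k<n. \<forall>r\<in>{a k..<a (Suc k)}. f r = f (a k)"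
    and "\<forall>r. r \<notin> J \<longrightarrow> f r = undefined" "\<forall>r\<in>J. f r \<in> A"
    unfolding bullet_carrier_def unit_partition_def by blast
  then show "(\<forall>r. r \<notin> J \<longrightarrow> f r = undefined) \<and> (\<forall>r\<in>J. f r \<in> A) \<and> step_function f"
    using step_function_if_partition by blast
next
  assume f: "(\<forall>r. r \<notin> J \<longrightarrow> f r = undefined) \<and> (\<forall>r\<in>J. f r \<in> A) \<and> step_function f"
  then obtain a n where "unit_partition a n" "\<forall>k<n. \<forall>r\<in>{a k..<a (Suc k)}. f r = f (a k)"
    using partition_if_step_function by blast
  then show "f \<in> bullet_carrier A"
    using f unfolding bullet_carrier_def unit_partition_def by blast
qed

lemma bullet_carrier_in: "f \<in> bullet_carrier A \<Longrightarrow> r \<in> J \<Longrightarrow> f r \<in> A"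
  by (simp add: bullet_carrier_iff)

lemma bullet_carrier_eqI:
  assumes "f \<in> bullet_carrier A" "g \<in> bullet_carrier B" "\<And>r. r \<in> J \<Longrightarrow> f r = g r"
  shows "f = g"
proof
  fix r
  show "f r = g r"
    using assms by (cases "r \<in> J") (simp_all add: bullet_carrier_iff)
qed

lemma bullet_carrier_finite_range:
  assumes "f \<in> bullet_carrier A"
  shows "finite (f ` J)"
proof -
  obtain a n where a: "unit_partition a n" "\<forall>k<n. \<forall>r\<in>{a k..<a (Suc k)}. f r = f (a k)"
    using assms unfolding bullet_carrier_def unit_partition_def by blast
  have "f ` J \<subseteq> f ` a ` {..<n}"
  proof
    fix y
    assume "y \<in> f ` J"
    then obtain r where r: "r \<in> J" "y = f r"
      by blast
    then obtain k where "k < n" "a k \<le> r" "r < a (Suc k)"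
      using unit_partition_cover[OF a(1)] by auto
    moreover from this have "f r = f (a k)"
      using a(2)[rule_format, of k r] by simp
    ultimately show "y \<in> f ` a ` {..<n}"
      using r by auto
  qed
  then show ?thesis
    by (rule finite_subset) simp
qed

lemma bullet_carrier_level_set_lmeasurable:
  assumes "f \<in> bullet_carrier A" "g \<in> bullet_carrier B"
  shows "{r\<in>J. P (f r) (g r)} \<in> lmeasurable"
proof -
  have "step_function (\<lambda>r. (f r, g r))"
    using assms by (intro step_function_pair) (simp_all add: bullet_carrier_iff)
  from step_function_level_set_lmeasurable[OF this, of "\<lambda>(x, y). P x y"]
  show ?thesis
    by simp
qed

lemma const_bullet_in_carrier: "x \<in> A \<Longrightarrow> const_bullet x \<in> bullet_carrier A"
  unfolding bullet_carrier_iff const_bullet_def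
  by (auto intro: step_function_cong[OF step_function_const[of x]])

lemma bullet_carrier_pointwise:
  assumes "f \<in> bullet_carrier A" "g \<in> bullet_carrier B" "h \<in> bullet_carrier C"
    and "\<And>x y z. x \<in> A \<Longrightarrow> y \<in> B \<Longrightarrow> z \<in> C \<Longrightarrow> F x y z \<in> D"
  shows "(\<lambda>r. if r \<in> J then F (f r) (g r) (h r) else undefined) \<in> bullet_carrier D"
proof -
  have "step_function (\<lambda>r. F (f r) (g r) (h r))"
    using step_function_compose[OF step_function_pair[OF step_function_pair],
        of f g h "\<lambda>((x, y), z). F x y z"] assms(1-3)
    by (simp add: bullet_carrier_iff)
  then show ?thesis
    using assms unfolding bullet_carrier_iff by (auto elim: step_function_cong)
qed

section \<open>Gyrogroups on a carrier set\<close>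

locale gyrogroup_on =
  fixes G :: "'a set" and op :: "'a \<Rightarrow> 'a \<Rightarrow> 'a" (infixl \<open>\<oplus>\<close> 65)
    and gyr :: "'a \<Rightarrow> 'a \<Rightarrow> 'a \<Rightarrow> 'a"
  assumes gyrogroup_with: "gyrogroup_with G (\<oplus>) gyr"
begin

abbreviation gyro_zero (\<open>\<zero>\<close>) where "\<zero> \<equiv> gzero G (\<oplus>)"
abbreviation gyro_minus (\<open>\<ominus> _\<close> [81] 80) where "\<ominus> x \<equiv> ginv G (\<oplus>) x"

lemmas gyrogroup_axioms = gyrogroup_with[unfolded gyrogroup_with_def]

lemma op_closed: "x \<in> G \<Longrightarrow> y \<in> G \<Longrightarrow> x \<oplus> y \<in> G"
  using gyrogroup_axioms[THEN conjunct1] by blast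

lemma gyro_zero_neutral: "\<zero> \<in> G \<and> (\<forall>a\<in>G. \<zero> \<oplus> a = a \<and> a \<oplus> \<zero> = a)"
  unfolding gzero_def by (rule theI'[OF gyrogroup_axioms[THEN conjunct2, THEN conjunct1]])

lemma zero_closed: "\<zero> \<in> G"
  and left_zero: "a \<in> G \<Longrightarrow> \<zero> \<oplus> a = a"
  and right_zero: "a \<in> G \<Longrightarrow> a \<oplus> \<zero> = a"
  using gyro_zero_neutral by blast+

lemma ex1_gyro_minus: "x \<in> G \<Longrightarrow> \<exists>!y. y \<in> G \<and> y \<oplus> x = \<zero> \<and> x \<oplus> y = \<zero>"
  using gyrogroup_axioms[THEN conjunct2, THEN conjunct2, THEN conjunct1] by blast

lemma gyro_minus_inverse: "x \<in> G \<Longrightarrow> \<ominus> x \<in> G \<and> \<ominus> x \<oplus> x = \<zero> \<and> x \<oplus> \<ominus> x = \<zero>"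
  unfolding ginv_def by (rule theI'[OF ex1_gyro_minus])

lemma minus_closed: "x \<in> G \<Longrightarrow> \<ominus> x \<in> G"
  and left_minus: "x \<in> G \<Longrightarrow> \<ominus> x \<oplus> x = \<zero>"
  and right_minus: "x \<in> G \<Longrightarrow> x \<oplus> \<ominus> x = \<zero>"
  using gyro_minus_inverse by blast+

lemma minus_unique: "x \<in> G \<Longrightarrow> y \<in> G \<Longrightarrow> y \<oplus> x = \<zero> \<Longrightarrow> x \<oplus> y = \<zero> \<Longrightarrow> \<ominus> x = y"
  unfolding ginv_def by (rule the1_equality[OF ex1_gyro_minus]) auto

lemma gyr_automorphism: "x \<in> G \<Longrightarrow> y \<in> G \<Longrightarrow> gyro_automorphism G (\<oplus>) (gyr x y)"
  using gyrogroup_axioms[THEN conjunct2, THEN conjunct2, THEN conjunct2, THEN conjunct1] by blast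

lemma gyr_image: "x \<in> G \<Longrightarrow> y \<in> G \<Longrightarrow> gyr x y ` G = G"
  and gyr_inj_on: "x \<in> G \<Longrightarrow> y \<in> G \<Longrightarrow> inj_on (gyr x y) G"
  using gyr_automorphism unfolding gyro_automorphism_def bij_betw_def by blast+

lemma gyr_closed: "x \<in> G \<Longrightarrow> y \<in> G \<Longrightarrow> z \<in> G \<Longrightarrow> gyr x y z \<in> G"
  using gyr_image by blast

lemma gyr_op: "x \<in> G \<Longrightarrow> y \<in> G \<Longrightarrow> a \<in> G \<Longrightarrow> b \<in> G \<Longrightarrow> gyr x y (a \<oplus> b) = gyr x y a \<oplus> gyr x y b"
  using gyr_automorphism unfolding gyro_automorphism_def by blast

lemma left_gyroassoc: "x \<in> G \<Longrightarrow> y \<in> G \<Longrightarrow> z \<in> G \<Longrightarrow> x \<oplus> (y \<oplus> z) = (x \<oplus> y) \<oplus> gyr x y z"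
  using gyrogroup_axioms[THEN conjunct2, THEN conjunct2, THEN conjunct2, THEN conjunct2, THEN conjunct1]
  by blast

lemma left_loop: "x \<in> G \<Longrightarrow> y \<in> G \<Longrightarrow> z \<in> G \<Longrightarrow> gyr (x \<oplus> y) y z = gyr x y z"
  using gyrogroup_axioms[THEN conjunct2, THEN conjunct2, THEN conjunct2, THEN conjunct2, THEN conjunct2]
  by blast

lemma minus_left_cancel_gyr:
  assumes "a \<in> G" "z \<in> G"
  shows "\<ominus> a \<oplus> (a \<oplus> z) = gyr \<zero> a z"
proof -
  have "\<ominus> a \<oplus> (a \<oplus> z) = (\<ominus> a \<oplus> a) \<oplus> gyr (\<ominus> a) a z"
    using left_gyroassoc[OF minus_closed assms(1)] assms by simp
  also have "\<dots> = gyr (\<ominus> a) a z"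
    using assms by (simp add: left_minus left_zero gyr_closed minus_closed)
  also have "\<dots> = gyr (\<ominus> a \<oplus> a) a z"
    using assms by (simp add: left_loop minus_closed)
  finally show ?thesis
    using assms by (simp add: left_minus)
qed

text \<open>Left cancellation up to gyr[0,a] makes gyr[0,a] idempotent; being injective, it is the identity.\<close>

lemma gyr_zero_left:
  assumes "a \<in> G" "z \<in> G"
  shows "gyr \<zero> a z = z"
proof -
  have same_left: "a \<oplus> gyr \<zero> a w = a \<oplus> w" if "w \<in> G" for w
    using left_gyroassoc[OF zero_closed assms(1) that] assms(1) that by (simp add: left_zero op_closed)
  have gz: "gyr \<zero> a z \<in> G"
    using gyr_closed zero_closed assms by blast
  have "gyr \<zero> a (gyr \<zero> a z) = \<ominus> a \<oplus> (a \<oplus> gyr \<zero> a z)"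
    using minus_left_cancel_gyr[OF assms(1) gz] by simp
  also have "\<dots> = gyr \<zero> a z"
    using same_left[OF assms(2)] minus_left_cancel_gyr[OF assms] by simp
  finally show ?thesis
    using gyr_inj_on[OF zero_closed assms(1)] gz assms(2) unfolding inj_on_def by blast
qed

lemma minus_left_cancel: "a \<in> G \<Longrightarrow> b \<in> G \<Longrightarrow> \<ominus> a \<oplus> (a \<oplus> b) = b"
  by (simp add: minus_left_cancel_gyr gyr_zero_left)

lemma minus_minus: "a \<in> G \<Longrightarrow> \<ominus> (\<ominus> a) = a"
  by (intro minus_unique) (simp_all add: minus_closed left_minus right_minus)

lemma left_cancel_minus: "a \<in> G \<Longrightarrow> b \<in> G \<Longrightarrow> a \<oplus> (\<ominus> a \<oplus> b) = b"
  using minus_left_cancel[of "\<ominus> a" b] by (simp add: minus_closed minus_minus)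

lemma minus_zero: "\<ominus> \<zero> = \<zero>"
  by (intro minus_unique) (simp_all add: zero_closed left_zero)

lemma minus_op_eq_zero_iff: "a \<in> G \<Longrightarrow> b \<in> G \<Longrightarrow> \<ominus> a \<oplus> b = \<zero> \<longleftrightarrow> a = b"
  using left_cancel_minus[of a b] by (auto simp: right_zero left_minus)

lemma gyr_eq: "a \<in> G \<Longrightarrow> b \<in> G \<Longrightarrow> c \<in> G \<Longrightarrow> gyr a b c = \<ominus> (a \<oplus> b) \<oplus> (a \<oplus> (b \<oplus> c))"
  by (simp add: left_gyroassoc minus_left_cancel op_closed gyr_closed)

lemma gyrogroup_with_subset:
  assumes H: "H \<subseteq> G" "\<zero> \<in> H" "\<And>x y. x \<in> H \<Longrightarrow> y \<in> H \<Longrightarrow> x \<oplus> y \<in> H"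
    "\<And>x. x \<in> H \<Longrightarrow> \<ominus> x \<in> H" "\<And>x y. x \<in> H \<Longrightarrow> y \<in> H \<Longrightarrow> gyr x y ` H = H"
  shows "gyrogroup_with H (\<oplus>) gyr"
proof -
  have zero_H: "\<zero> \<in> H \<and> (\<forall>a\<in>H. \<zero> \<oplus> a = a \<and> a \<oplus> \<zero> = a)"
    using H(1,2) left_zero right_zero by (meson subsetD)
  have ex1_zero_H: "\<exists>!e. e \<in> H \<and> (\<forall>a\<in>H. e \<oplus> a = a \<and> a \<oplus> e = a)"
  proof (rule ex1I[of _ \<zero>])
    fix e
    assume e: "e \<in> H \<and> (\<forall>a\<in>H. e \<oplus> a = a \<and> a \<oplus> e = a)"
    then have "e \<oplus> \<zero> = \<zero>"
      using H(2) by simp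
    moreover have "e \<oplus> \<zero> = e"
      using e H(1) right_zero by (meson subsetD)
    ultimately show "e = \<zero>"
      by simp
  qed (rule zero_H)
  have gzero_H: "gzero H (\<oplus>) = \<zero>"
    unfolding gzero_def[of H] by (rule the1_equality[OF ex1_zero_H zero_H])
  show ?thesis
    unfolding gyrogroup_with_def gzero_H
  proof (intro conjI ballI)
    show "\<And>x y. x \<in> H \<Longrightarrow> y \<in> H \<Longrightarrow> x \<oplus> y \<in> H"
      by (rule H(3))
    show "\<exists>!e. e \<in> H \<and> (\<forall>a\<in>H. e \<oplus> a = a \<and> a \<oplus> e = a)"
      by (rule ex1_zero_H)
  next
    fix x
    assume x: "x \<in> H"
    then have "x \<in> G"
      using H(1) by blast
    show "\<exists>!y. y \<in> H \<and> y \<oplus> x = \<zero> \<and> x \<oplus> y = \<zero>"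
    proof (rule ex1I[of _ "\<ominus> x"])
      show "\<ominus> x \<in> H \<and> \<ominus> x \<oplus> x = \<zero> \<and> x \<oplus> \<ominus> x = \<zero>"
        using x H(4) \<open>x \<in> G\<close> left_minus right_minus by simp
      fix y
      assume "y \<in> H \<and> y \<oplus> x = \<zero> \<and> x \<oplus> y = \<zero>"
      then show "y = \<ominus> x"
        using minus_unique[of x y] \<open>x \<in> G\<close> H(1) by auto
    qed
  next
    fix x y
    assume xy: "x \<in> H" "y \<in> H"
    show "gyro_automorphism H (\<oplus>) (gyr x y)"
      unfolding gyro_automorphism_def bij_betw_def
    proof (intro conjI ballI)
      show "inj_on (gyr x y) H"
        using gyr_inj_on[of x y] xy H(1) inj_on_subset by blast
      show "gyr x y ` H = H"
        using H(5) xy by blast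
      fix a b
      assume "a \<in> H" "b \<in> H"
      then show "gyr x y (a \<oplus> b) = gyr x y a \<oplus> gyr x y b"
        using gyr_op xy H(1) by blast
    qed
  next
    fix x y z
    assume "x \<in> H" "y \<in> H" "z \<in> H"
    then have "x \<in> G" "y \<in> G" "z \<in> G"
      using H(1) by blast+
    then show "x \<oplus> (y \<oplus> z) = x \<oplus> y \<oplus> gyr x y z" "gyr (x \<oplus> y) y z = gyr x y z"
      by (simp_all add: left_gyroassoc left_loop)
  qed
qed

end

lemma gyro_automorphism_cong:
  assumes aut: "gyro_automorphism H op h" and eq: "\<And>x. x \<in> H \<Longrightarrow> h x = h' x"
    and closed: "\<And>x y. x \<in> H \<Longrightarrow> y \<in> H \<Longrightarrow> op x y \<in> H"
  shows "gyro_automorphism H op h'"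
  unfolding gyro_automorphism_def
proof (intro conjI ballI)
  have "bij_betw h H H"
    using aut unfolding gyro_automorphism_def by blast
  then show "bij_betw h' H H"
    by (subst bij_betw_cong[of H h' h]) (simp_all add: eq)
  fix a b
  assume ab: "a \<in> H" "b \<in> H"
  have "h' (op a b) = h (op a b)"
    using closed[OF ab] eq by simp
  also have "\<dots> = op (h a) (h b)"
    using aut ab unfolding gyro_automorphism_def by blast
  finally show "h' (op a b) = op (h' a) (h' b)"
    using ab eq by simp
qed

section \<open>The topology of the step-function gyrogroup\<close>

lemma continuous_map_pair_nbhd:
  assumes "continuous_map (prod_topology X X) Y \<Phi>" "openin Y V" "x \<in> topspace X" "\<Phi> (x, x) \<in> V"
  shows "\<exists>W. openin X W \<and> x \<in> W \<and> (\<forall>v\<in>W. \<forall>w\<in>W. \<Phi> (v, w) \<in> V)"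
proof -
  have "openin (prod_topology X X) {p \<in> topspace (prod_topology X X). \<Phi> p \<in> V}"
    using assms(1,2) by (rule openin_continuous_map_preimage)
  moreover have "(x, x) \<in> {p \<in> topspace (prod_topology X X). \<Phi> p \<in> V}"
    using assms(3,4) by simp
  ultimately obtain U U' where U: "openin X U" "openin X U'" "x \<in> U" "x \<in> U'"
    "U \<times> U' \<subseteq> {p \<in> topspace (prod_topology X X). \<Phi> p \<in> V}"
    by (subst (asm) openin_prod_topology_alt) (elim allE impE exE conjE, assumption, blast)
  show ?thesis
    by (rule exI[of _ "U \<inter> U'"]) (use U in auto)
qed

text \<open>Applied to the finitely many values of a step function, this gives one neighbourhood of
  \<zero> that works at every point of J.\<close>

lemma finite_continuous_maps_pair_nbhd:
  assumes "finite A" "openin Y V" "x \<in> topspace X"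
    and "\<And>a. a \<in> A \<Longrightarrow> continuous_map (prod_topology X X) Y (\<Phi> a) \<and> \<Phi> a (x, x) \<in> V"
  shows "\<exists>W. openin X W \<and> x \<in> W \<and> (\<forall>a\<in>A. \<forall>v\<in>W. \<forall>w\<in>W. \<Phi> a (v, w) \<in> V)"
  using assms(1,4)
proof (induction A rule: finite_induct)
  case empty
  then show ?case
    using assms(3) by (intro exI[of _ "topspace X"]) auto
next
  case (insert a A)
  then obtain W where W: "openin X W" "x \<in> W" "\<forall>a\<in>A. \<forall>v\<in>W. \<forall>w\<in>W. \<Phi> a (v, w) \<in> V"
    by auto
  obtain W' where W': "openin X W'" "x \<in> W'" "\<forall>v\<in>W'. \<forall>w\<in>W'. \<Phi> a (v, w) \<in> V"
    using continuous_map_pair_nbhd[of X Y "\<Phi> a" V x] insert.prems assms(2,3) by auto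
  show ?case
    by (rule exI[of _ "W \<inter> W'"]) (use W W' in auto)
qed

locale topological_gyrogroup_on = gyrogroup_on +
  fixes X :: "'a topology"
  assumes topological_gyrogroup: "topological_gyrogroup G (\<oplus>) X"
begin

abbreviation bullet_plus (infixl \<open>\<oplus>\<^sup>\<bullet>\<close> 65) where "f \<oplus>\<^sup>\<bullet> g \<equiv> bullet_op (\<oplus>) f g"
abbreviation "G\<^sub>b \<equiv> bullet_carrier G"
abbreviation "T\<^sub>b \<equiv> bullet_topology G (\<oplus>) X"
abbreviation "bullet_nbhd f V \<epsilon> \<equiv> (\<oplus>\<^sup>\<bullet>) f ` bullet_O G (\<oplus>) V \<epsilon>"

lemma topspace_X: "topspace X = G"
  and t1_space_X: "t1_space X"
  and continuous_op: "continuous_map (prod_topology X X) X (\<lambda>p. fst p \<oplus> snd p)"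
  and continuous_minus: "continuous_map X X (ginv G (\<oplus>))"
  using topological_gyrogroup unfolding topological_gyrogroup_def by blast+

lemma continuous_map_op:
  "continuous_map Y X f \<Longrightarrow> continuous_map Y X g \<Longrightarrow> continuous_map Y X (\<lambda>y. f y \<oplus> g y)"
  using continuous_map_compose[OF iffD2[OF continuous_map_paired, of Y X f X g] continuous_op]
  by (simp add: o_def)

lemma continuous_map_minus: "continuous_map Y X f \<Longrightarrow> continuous_map Y X (\<lambda>y. \<ominus> f y)"
  using continuous_map_compose[OF _ continuous_minus] by (simp add: o_def)

lemma continuous_map_const_point: "c \<in> G \<Longrightarrow> continuous_map Y X (\<lambda>y. c)"
  by (simp add: topspace_X)

lemma bullet_op_apply: "r \<in> J \<Longrightarrow> (f \<oplus>\<^sup>\<bullet> g) r = f r \<oplus> g r"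
  by (simp add: bullet_op_def)

lemma bullet_op_closed: "f \<in> G\<^sub>b \<Longrightarrow> g \<in> G\<^sub>b \<Longrightarrow> f \<oplus>\<^sup>\<bullet> g \<in> G\<^sub>b"
  unfolding bullet_op_def by (rule bullet_carrier_pointwise[of f G g G g G]) (auto intro: op_closed)

lemma const_zero_closed: "const_bullet \<zero> \<in> G\<^sub>b"
  by (rule const_bullet_in_carrier[OF zero_closed])

lemma bullet_op_const_zero: "f \<in> G\<^sub>b \<Longrightarrow> f \<oplus>\<^sup>\<bullet> const_bullet \<zero> = f"
  by (rule bullet_carrier_eqI[OF bullet_op_closed[OF _ const_zero_closed]])
    (simp_all add: bullet_op_apply const_bullet_def right_zero bullet_carrier_in)

lemma bullet_const_zero_op: "f \<in> G\<^sub>b \<Longrightarrow> const_bullet \<zero> \<oplus>\<^sup>\<bullet> f = f"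
  by (rule bullet_carrier_eqI[OF bullet_op_closed[OF const_zero_closed]])
    (simp_all add: bullet_op_apply const_bullet_def left_zero bullet_carrier_in)

lemma bullet_gyrodiff_closed:
  "f \<in> G\<^sub>b \<Longrightarrow> k \<in> G\<^sub>b \<Longrightarrow> (\<lambda>r. if r \<in> J then \<ominus> f r \<oplus> k r else undefined) \<in> G\<^sub>b"
  by (rule bullet_carrier_pointwise[of f G k G k G]) (auto intro: op_closed minus_closed)

lemma mem_bullet_nbhd_iff:
  assumes f: "f \<in> G\<^sub>b"
  shows "k \<in> bullet_nbhd f V \<epsilon> \<longleftrightarrow> k \<in> G\<^sub>b \<and> measure lebesgue {r\<in>J. \<ominus> f r \<oplus> k r \<notin> V} < \<epsilon>"
proof
  assume "k \<in> bullet_nbhd f V \<epsilon>"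
  then obtain u where u: "u \<in> G\<^sub>b" "measure lebesgue {r\<in>J. u r \<notin> V} < \<epsilon>" "k = f \<oplus>\<^sup>\<bullet> u"
    unfolding bullet_O_def by blast
  have "{r\<in>J. \<ominus> f r \<oplus> k r \<notin> V} = {r\<in>J. u r \<notin> V}"
    using u f by (auto simp: bullet_op_apply bullet_carrier_in minus_left_cancel)
  then show "k \<in> G\<^sub>b \<and> measure lebesgue {r\<in>J. \<ominus> f r \<oplus> k r \<notin> V} < \<epsilon>"
    using u f bullet_op_closed by simp
next
  assume k: "k \<in> G\<^sub>b \<and> measure lebesgue {r\<in>J. \<ominus> f r \<oplus> k r \<notin> V} < \<epsilon>"
  define u where "u = (\<lambda>r. if r \<in> J then \<ominus> f r \<oplus> k r else undefined)"
  have u: "u \<in> G\<^sub>b"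
    unfolding u_def using bullet_gyrodiff_closed[OF f] k by blast
  have "{r\<in>J. u r \<notin> V} = {r\<in>J. \<ominus> f r \<oplus> k r \<notin> V}"
    by (auto simp: u_def)
  then have "u \<in> bullet_O G (\<oplus>) V \<epsilon>"
    using k u unfolding bullet_O_def by simp
  moreover have "k = f \<oplus>\<^sup>\<bullet> u"
  proof (rule bullet_carrier_eqI[of k G _ G])
    show "k \<in> G\<^sub>b" "f \<oplus>\<^sup>\<bullet> u \<in> G\<^sub>b"
      using k u f bullet_op_closed by blast+
    show "k r = (f \<oplus>\<^sup>\<bullet> u) r" if "r \<in> J" for r
      using that f k by (simp add: u_def bullet_op_apply bullet_carrier_in left_cancel_minus)
  qed
  ultimately show "k \<in> bullet_nbhd f V \<epsilon>"
    by blast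
qed

lemma deviation_lmeasurable: "f \<in> G\<^sub>b \<Longrightarrow> k \<in> G\<^sub>b \<Longrightarrow> {r\<in>J. \<ominus> f r \<oplus> k r \<notin> V} \<in> lmeasurable"
  by (rule bullet_carrier_level_set_lmeasurable)

lemma bullet_nbhd_refl:
  assumes "f \<in> G\<^sub>b" "\<zero> \<in> V" "\<epsilon> > 0"
  shows "f \<in> bullet_nbhd f V \<epsilon>"
proof -
  have "{r\<in>J. \<ominus> f r \<oplus> f r \<notin> V} = {}"
    using assms by (auto simp: bullet_carrier_in left_minus)
  then have "measure lebesgue {r\<in>J. \<ominus> f r \<oplus> f r \<notin> V} < \<epsilon>"
    using assms(3) by (simp only: measure_empty)
  then show ?thesis
    using mem_bullet_nbhd_iff[OF assms(1)] assms(1) by blast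
qed

lemma bullet_nbhd_subset: "f \<in> G\<^sub>b \<Longrightarrow> bullet_nbhd f V \<epsilon> \<subseteq> G\<^sub>b"
  using mem_bullet_nbhd_iff by blast

lemma bullet_nbhd_mono:
  assumes f: "f \<in> G\<^sub>b" and "V' \<subseteq> V" "\<epsilon>' \<le> \<epsilon>"
  shows "bullet_nbhd f V' \<epsilon>' \<subseteq> bullet_nbhd f V \<epsilon>"
proof
  fix k
  assume "k \<in> bullet_nbhd f V' \<epsilon>'"
  then have k: "k \<in> G\<^sub>b" "measure lebesgue {r\<in>J. \<ominus> f r \<oplus> k r \<notin> V'} < \<epsilon>'"
    using mem_bullet_nbhd_iff[OF f] by auto
  have "measure lebesgue {r\<in>J. \<ominus> f r \<oplus> k r \<notin> V} \<le> measure lebesgue {r\<in>J. \<ominus> f r \<oplus> k r \<notin> V'}"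
    using deviation_lmeasurable[OF f k(1)] assms(2) by (intro measure_mono_fmeasurable) auto
  then show "k \<in> bullet_nbhd f V \<epsilon>"
    using mem_bullet_nbhd_iff[OF f] k assms(3) by simp
qed

definition bullet_open :: "(real \<Rightarrow> 'a) set \<Rightarrow> bool" where
  "bullet_open U \<longleftrightarrow> U \<subseteq> G\<^sub>b \<and>
     (\<forall>f\<in>U. \<exists>V \<epsilon>. openin X V \<and> \<zero> \<in> V \<and> \<epsilon> > 0 \<and> bullet_nbhd f V \<epsilon> \<subseteq> U)"

lemma istopology_bullet_open: "istopology bullet_open"
  unfolding istopology_def
proof (intro conjI allI impI ballI)
  fix S U
  assume S: "bullet_open S" and U: "bullet_open U"
  show "bullet_open (S \<inter> U)"
    unfolding bullet_open_def
  proof (intro conjI ballI)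
    show "S \<inter> U \<subseteq> G\<^sub>b"
      using S unfolding bullet_open_def by blast
    fix f
    assume f: "f \<in> S \<inter> U"
    then have "f \<in> G\<^sub>b"
      using S unfolding bullet_open_def by blast
    have "\<exists>V \<epsilon>. openin X V \<and> \<zero> \<in> V \<and> \<epsilon> > 0 \<and> bullet_nbhd f V \<epsilon> \<subseteq> S"
      using S f unfolding bullet_open_def by (meson IntD1 bspec)
    then obtain V \<epsilon> where 1: "openin X V" "\<zero> \<in> V" "\<epsilon> > 0" "bullet_nbhd f V \<epsilon> \<subseteq> S"
      by blast
    have "\<exists>V \<epsilon>. openin X V \<and> \<zero> \<in> V \<and> \<epsilon> > 0 \<and> bullet_nbhd f V \<epsilon> \<subseteq> U"
      using U f unfolding bullet_open_def by (meson IntD2 bspec)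
    then obtain V' \<epsilon>' where 2: "openin X V'" "\<zero> \<in> V'" "\<epsilon>' > 0" "bullet_nbhd f V' \<epsilon>' \<subseteq> U"
      by blast
    have "bullet_nbhd f (V \<inter> V') (min \<epsilon> \<epsilon>') \<subseteq> bullet_nbhd f V \<epsilon>"
      "bullet_nbhd f (V \<inter> V') (min \<epsilon> \<epsilon>') \<subseteq> bullet_nbhd f V' \<epsilon>'"
      by (rule bullet_nbhd_mono[OF \<open>f \<in> G\<^sub>b\<close>]; simp)+
    then have "bullet_nbhd f (V \<inter> V') (min \<epsilon> \<epsilon>') \<subseteq> S \<inter> U"
      using 1(4) 2(4) by (meson Int_greatest subset_trans)
    then show "\<exists>V \<epsilon>. openin X V \<and> \<zero> \<in> V \<and> \<epsilon> > 0 \<and> bullet_nbhd f V \<epsilon> \<subseteq> S \<inter> U"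
      using 1 2 by (intro exI[of _ "V \<inter> V'"] exI[of _ "min \<epsilon> \<epsilon>'"]) auto
  qed
next
  fix K
  assume K: "\<forall>U\<in>K. bullet_open U"
  show "bullet_open (\<Union>K)"
    unfolding bullet_open_def
  proof (intro conjI ballI)
    show "\<Union>K \<subseteq> G\<^sub>b"
      using K unfolding bullet_open_def by blast
    fix f
    assume "f \<in> \<Union>K"
    then obtain U where "U \<in> K" "f \<in> U"
      by blast
    moreover have "bullet_open U"
      using K \<open>U \<in> K\<close> by blast
    ultimately have "\<exists>V \<epsilon>. openin X V \<and> \<zero> \<in> V \<and> \<epsilon> > 0 \<and> bullet_nbhd f V \<epsilon> \<subseteq> U"
      unfolding bullet_open_def by blast
    then show "\<exists>V \<epsilon>. openin X V \<and> \<zero> \<in> V \<and> \<epsilon> > 0 \<and> bullet_nbhd f V \<epsilon> \<subseteq> \<Union>K"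
      using \<open>U \<in> K\<close> by (meson Sup_upper subset_trans)
  qed
qed

lemma openin_bullet_topology: "openin T\<^sub>b U \<longleftrightarrow> bullet_open U"
proof -
  have "T\<^sub>b = topology bullet_open"
    unfolding bullet_topology_def bullet_open_def by simp
  then show ?thesis
    using topology_inverse'[OF istopology_bullet_open] by simp
qed

lemma topspace_bullet_topology: "topspace T\<^sub>b = G\<^sub>b"
proof -
  have "bullet_open G\<^sub>b"
    unfolding bullet_open_def using zero_closed topspace_X bullet_nbhd_subset
    by (auto intro!: exI[of _ G] exI[of _ "1::real"])
  then have "G\<^sub>b \<subseteq> topspace T\<^sub>b"
    using openin_bullet_topology openin_subset by blast
  moreover have "topspace T\<^sub>b \<subseteq> G\<^sub>b"
    using openin_bullet_topology[of "topspace T\<^sub>b"] unfolding bullet_open_def by simp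
  ultimately show ?thesis
    by blast
qed

lemma continuous_map_left_conj:
  "a \<in> G \<Longrightarrow> continuous_map (prod_topology X X) X (\<lambda>p. \<ominus> a \<oplus> ((a \<oplus> fst p) \<oplus> snd p))"
  by (intro continuous_map_op continuous_map_const_point minus_closed continuous_map_fst continuous_map_snd)

text \<open>The analogue of the triangle inequality for the basic neighbourhoods.\<close>

lemma bullet_nbhd_triangle:
  assumes h: "h \<in> G\<^sub>b" and V: "openin X V" "\<zero> \<in> V"
  obtains W where "openin X W" "\<zero> \<in> W"
    "\<And>k l \<epsilon>. k \<in> bullet_nbhd h W (\<epsilon> / 2) \<Longrightarrow> l \<in> bullet_nbhd k W (\<epsilon> / 2) \<Longrightarrow> l \<in> bullet_nbhd h V \<epsilon>"
proof -
  define \<Phi> where "\<Phi> = (\<lambda>a p. \<ominus> a \<oplus> ((a \<oplus> fst p) \<oplus> snd p))"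
  have "continuous_map (prod_topology X X) X (\<Phi> a) \<and> \<Phi> a (\<zero>, \<zero>) \<in> V" if "a \<in> h ` J" for a
  proof -
    have "a \<in> G"
      using that h bullet_carrier_in by blast
    then show ?thesis
      using continuous_map_left_conj V(2) by (simp add: \<Phi>_def right_zero left_minus)
  qed
  then have "\<exists>W. openin X W \<and> \<zero> \<in> W \<and> (\<forall>a\<in>h ` J. \<forall>v\<in>W. \<forall>w\<in>W. \<Phi> a (v, w) \<in> V)"
    using bullet_carrier_finite_range[OF h] V(1) zero_closed topspace_X
    by (intro finite_continuous_maps_pair_nbhd) auto
  then obtain W where W: "openin X W" "\<zero> \<in> W" "\<forall>a\<in>h ` J. \<forall>v\<in>W. \<forall>w\<in>W. \<Phi> a (v, w) \<in> V"
    by blast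
  have "l \<in> bullet_nbhd h V \<epsilon>"
    if k: "k \<in> bullet_nbhd h W (\<epsilon> / 2)" and l: "l \<in> bullet_nbhd k W (\<epsilon> / 2)" for k l \<epsilon>
  proof -
    have kG: "k \<in> G\<^sub>b" and km: "measure lebesgue {r\<in>J. \<ominus> h r \<oplus> k r \<notin> W} < \<epsilon> / 2"
      using k unfolding mem_bullet_nbhd_iff[OF h] by blast+
    have lG: "l \<in> G\<^sub>b" and lm: "measure lebesgue {r\<in>J. \<ominus> k r \<oplus> l r \<notin> W} < \<epsilon> / 2"
      using l unfolding mem_bullet_nbhd_iff[OF kG] by blast+
    have "\<ominus> h r \<oplus> l r \<in> V" if "r \<in> J" "\<ominus> h r \<oplus> k r \<in> W" "\<ominus> k r \<oplus> l r \<in> W" for r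
    proof -
      have "\<Phi> (h r) (\<ominus> h r \<oplus> k r, \<ominus> k r \<oplus> l r) \<in> V"
        using W(3) that by blast
      moreover have "h r \<in> G" "k r \<in> G" "l r \<in> G"
        using that(1) h kG lG by (simp_all add: bullet_carrier_in)
      ultimately show ?thesis
        by (simp add: \<Phi>_def left_cancel_minus)
    qed
    then have "measure lebesgue {r\<in>J. \<ominus> h r \<oplus> l r \<notin> V} < \<epsilon>"
      by (intro measure_exceptional_set_less[OF deviation_lmeasurable[OF h lG]
            deviation_lmeasurable[OF h kG] deviation_lmeasurable[OF kG lG] _ km lm]) auto
    then show ?thesis
      using lG by (simp only: mem_bullet_nbhd_iff[OF h])
  qed
  then show thesis
    by (rule that[OF W(1,2)])
qed

lemma bullet_nbhd_contains_open:
  assumes f: "f \<in> G\<^sub>b" and V: "openin X V" "\<zero> \<in> V" "\<epsilon> > 0"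
  shows "\<exists>U. openin T\<^sub>b U \<and> f \<in> U \<and> U \<subseteq> bullet_nbhd f V \<epsilon>"
proof -
  define U where "U = {h\<in>G\<^sub>b. \<exists>V' \<epsilon>'. openin X V' \<and> \<zero> \<in> V' \<and> \<epsilon>' > 0 \<and>
    bullet_nbhd h V' \<epsilon>' \<subseteq> bullet_nbhd f V \<epsilon>}"
  have "f \<in> U"
    unfolding U_def using f V by blast
  moreover have "U \<subseteq> bullet_nbhd f V \<epsilon>"
    unfolding U_def using bullet_nbhd_refl by blast
  moreover have "bullet_open U"
    unfolding bullet_open_def
  proof (intro conjI ballI)
    show "U \<subseteq> G\<^sub>b"
      unfolding U_def by blast
    fix h
    assume "h \<in> U"
    then obtain V' \<epsilon>' where h: "h \<in> G\<^sub>b" "openin X V'" "\<zero> \<in> V'" "\<epsilon>' > 0"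
      "bullet_nbhd h V' \<epsilon>' \<subseteq> bullet_nbhd f V \<epsilon>"
      unfolding U_def by blast
    obtain W where W: "openin X W" "\<zero> \<in> W"
      "\<And>k l. k \<in> bullet_nbhd h W (\<epsilon>' / 2) \<Longrightarrow> l \<in> bullet_nbhd k W (\<epsilon>' / 2) \<Longrightarrow> l \<in> bullet_nbhd h V' \<epsilon>'"
      using bullet_nbhd_triangle[OF h(1,2,3)] by metis
    have "bullet_nbhd h W (\<epsilon>' / 2) \<subseteq> U"
    proof
      fix k
      assume k: "k \<in> bullet_nbhd h W (\<epsilon>' / 2)"
      then have "bullet_nbhd k W (\<epsilon>' / 2) \<subseteq> bullet_nbhd f V \<epsilon>"
        using W(3) h(5) by blast
      moreover have "k \<in> G\<^sub>b"
        using k bullet_nbhd_subset[OF h(1)] by blast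
      ultimately show "k \<in> U"
        unfolding U_def using W(1,2) h(4) by (intro CollectI conjI exI[of _ W] exI[of _ "\<epsilon>' / 2"]) auto
    qed
    then show "\<exists>V \<epsilon>. openin X V \<and> \<zero> \<in> V \<and> \<epsilon> > 0 \<and> bullet_nbhd h V \<epsilon> \<subseteq> U"
      using W(1,2) h(4) by (intro exI[of _ W] exI[of _ "\<epsilon>' / 2"]) auto
  qed
  ultimately show ?thesis
    using openin_bullet_topology by blast
qed

lemma continuous_map_into_bullet:
  assumes "\<And>y. y \<in> topspace Y \<Longrightarrow> \<phi> y \<in> G\<^sub>b"
    and "\<And>y V \<epsilon>. y \<in> topspace Y \<Longrightarrow> openin X V \<Longrightarrow> \<zero> \<in> V \<Longrightarrow> \<epsilon> > 0 \<Longrightarrow>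
        \<exists>W. openin Y W \<and> y \<in> W \<and> (\<forall>z\<in>W. \<phi> z \<in> bullet_nbhd (\<phi> y) V \<epsilon>)"
  shows "continuous_map Y T\<^sub>b \<phi>"
  unfolding continuous_map_def topspace_bullet_topology
proof (intro conjI allI impI)
  show "\<phi> \<in> topspace Y \<rightarrow> G\<^sub>b"
    using assms(1) by blast
  fix U
  assume "openin T\<^sub>b U"
  then have U: "bullet_open U"
    using openin_bullet_topology by blast
  show "openin Y {x \<in> topspace Y. \<phi> x \<in> U}"
  proof (subst openin_subopen, intro ballI)
    fix y
    assume y: "y \<in> {x \<in> topspace Y. \<phi> x \<in> U}"
    then have "\<exists>V \<epsilon>. openin X V \<and> \<zero> \<in> V \<and> \<epsilon> > 0 \<and> bullet_nbhd (\<phi> y) V \<epsilon> \<subseteq> U"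
      using U unfolding bullet_open_def by blast
    then obtain V \<epsilon> where V: "openin X V" "\<zero> \<in> V" "\<epsilon> > 0" "bullet_nbhd (\<phi> y) V \<epsilon> \<subseteq> U"
      by blast
    obtain W where W: "openin Y W" "y \<in> W" "\<forall>z\<in>W. \<phi> z \<in> bullet_nbhd (\<phi> y) V \<epsilon>"
      using assms(2)[of y V \<epsilon>] y V by blast
    have "W \<subseteq> {x \<in> topspace Y. \<phi> x \<in> U}"
      using W V(4) openin_subset[OF W(1)] by blast
    then show "\<exists>T. openin Y T \<and> y \<in> T \<and> T \<subseteq> {x \<in> topspace Y. \<phi> x \<in> U}"
      using W by blast
  qed
qed

lemma continuous_bullet_op: "continuous_map (prod_topology T\<^sub>b T\<^sub>b) T\<^sub>b (\<lambda>p. fst p \<oplus>\<^sup>\<bullet> snd p)"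
proof (rule continuous_map_into_bullet)
  show "fst p \<oplus>\<^sup>\<bullet> snd p \<in> G\<^sub>b" if "p \<in> topspace (prod_topology T\<^sub>b T\<^sub>b)" for p
    using that by (auto simp: topspace_bullet_topology bullet_op_closed)
next
  fix p V \<epsilon>
  assume p: "p \<in> topspace (prod_topology T\<^sub>b T\<^sub>b)" and V: "openin X V" "\<zero> \<in> V" "(\<epsilon>::real) > 0"
  obtain f g where fg: "p = (f, g)" "f \<in> G\<^sub>b" "g \<in> G\<^sub>b"
    using p by (auto simp: topspace_bullet_topology)
  define \<Phi> where "\<Phi> = (\<lambda>q p. \<ominus> (fst q \<oplus> snd q) \<oplus> ((fst q \<oplus> fst p) \<oplus> (snd q \<oplus> snd p)))"
  have "continuous_map (prod_topology X X) X (\<Phi> q) \<and> \<Phi> q (\<zero>, \<zero>) \<in> V"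
    if q_range: "q \<in> (\<lambda>r. (f r, g r)) ` J" for q
  proof -
    obtain r where "r \<in> J" "q = (f r, g r)"
      using q_range by blast
    then obtain a b where q: "q = (a, b)" "a \<in> G" "b \<in> G"
      using fg(2,3) bullet_carrier_in by blast
    have "continuous_map (prod_topology X X) X (\<Phi> q)"
      unfolding \<Phi>_def q fst_conv snd_conv
      by (intro continuous_map_op continuous_map_const_point continuous_map_fst continuous_map_snd
          minus_closed op_closed q)
    moreover have "\<Phi> q (\<zero>, \<zero>) = \<zero>"
      unfolding \<Phi>_def q using q by (simp add: right_zero left_minus op_closed)
    ultimately show ?thesis
      using V(2) by simp
  qed
  moreover have "finite ((\<lambda>r. (f r, g r)) ` J)"
    by (rule finite_subset[of _ "f ` J \<times> g ` J"])
      (auto simp: bullet_carrier_finite_range[OF fg(2)] bullet_carrier_finite_range[OF fg(3)])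
  ultimately have "\<exists>W. openin X W \<and> \<zero> \<in> W \<and>
      (\<forall>q\<in>(\<lambda>r. (f r, g r)) ` J. \<forall>v\<in>W. \<forall>w\<in>W. \<Phi> q (v, w) \<in> V)"
    using V(1) zero_closed topspace_X by (intro finite_continuous_maps_pair_nbhd) auto
  then obtain W where W: "openin X W" "\<zero> \<in> W"
    "\<forall>q\<in>(\<lambda>r. (f r, g r)) ` J. \<forall>v\<in>W. \<forall>w\<in>W. \<Phi> q (v, w) \<in> V"
    by blast
  obtain U1 where U1: "openin T\<^sub>b U1" "f \<in> U1" "U1 \<subseteq> bullet_nbhd f W (\<epsilon> / 2)"
    using bullet_nbhd_contains_open[OF fg(2) W(1,2), of "\<epsilon> / 2"] V(3) by auto
  obtain U2 where U2: "openin T\<^sub>b U2" "g \<in> U2" "U2 \<subseteq> bullet_nbhd g W (\<epsilon> / 2)"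
    using bullet_nbhd_contains_open[OF fg(3) W(1,2), of "\<epsilon> / 2"] V(3) by auto
  show "\<exists>U. openin (prod_topology T\<^sub>b T\<^sub>b) U \<and> p \<in> U \<and>
      (\<forall>z\<in>U. fst z \<oplus>\<^sup>\<bullet> snd z \<in> bullet_nbhd (fst p \<oplus>\<^sup>\<bullet> snd p) V \<epsilon>)"
  proof (intro exI[of _ "U1 \<times> U2"] conjI ballI)
    show "openin (prod_topology T\<^sub>b T\<^sub>b) (U1 \<times> U2)"
      using U1 U2 by (simp add: openin_prod_Times_iff)
    show "p \<in> U1 \<times> U2"
      using fg U1 U2 by simp
    fix z
    assume "z \<in> U1 \<times> U2"
    then obtain h k where z: "z = (h, k)" "h \<in> bullet_nbhd f W (\<epsilon> / 2)" "k \<in> bullet_nbhd g W (\<epsilon> / 2)"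
      using U1(3) U2(3) by blast
    have hG: "h \<in> G\<^sub>b" and hm: "measure lebesgue {r\<in>J. \<ominus> f r \<oplus> h r \<notin> W} < \<epsilon> / 2"
      using z(2) unfolding mem_bullet_nbhd_iff[OF fg(2)] by blast+
    have kG: "k \<in> G\<^sub>b" and km: "measure lebesgue {r\<in>J. \<ominus> g r \<oplus> k r \<notin> W} < \<epsilon> / 2"
      using z(3) unfolding mem_bullet_nbhd_iff[OF fg(3)] by blast+
    have fgG: "f \<oplus>\<^sup>\<bullet> g \<in> G\<^sub>b" and hkG: "h \<oplus>\<^sup>\<bullet> k \<in> G\<^sub>b"
      using fg hG kG bullet_op_closed by blast+
    have "\<ominus> (f \<oplus>\<^sup>\<bullet> g) r \<oplus> (h \<oplus>\<^sup>\<bullet> k) r \<in> V"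
      if "r \<in> J" "\<ominus> f r \<oplus> h r \<in> W" "\<ominus> g r \<oplus> k r \<in> W" for r
    proof -
      have "\<Phi> (f r, g r) (\<ominus> f r \<oplus> h r, \<ominus> g r \<oplus> k r) \<in> V"
        using W(3) that by blast
      moreover have "f r \<in> G" "g r \<in> G" "h r \<in> G" "k r \<in> G"
        using that(1) fg(2,3) hG kG by (simp_all add: bullet_carrier_in)
      ultimately show ?thesis
        using that(1) by (simp add: \<Phi>_def left_cancel_minus bullet_op_apply)
    qed
    then have "measure lebesgue {r\<in>J. \<ominus> (f \<oplus>\<^sup>\<bullet> g) r \<oplus> (h \<oplus>\<^sup>\<bullet> k) r \<notin> V} < \<epsilon>"
      by (intro measure_exceptional_set_less[OF deviation_lmeasurable[OF fgG hkG]
            deviation_lmeasurable[OF fg(2) hG] deviation_lmeasurable[OF fg(3) kG] _ hm km]) auto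
    then show "fst z \<oplus>\<^sup>\<bullet> snd z \<in> bullet_nbhd (fst p \<oplus>\<^sup>\<bullet> snd p) V \<epsilon>"
      using hkG z(1) fg(1) by (simp only: mem_bullet_nbhd_iff[OF fgG] fst_conv snd_conv)
  qed
qed

definition bullet_minus :: "(real \<Rightarrow> 'a) \<Rightarrow> (real \<Rightarrow> 'a)" where
  "bullet_minus f = (\<lambda>r. if r \<in> J then \<ominus> f r else undefined)"

lemma bullet_minus_closed: "f \<in> G\<^sub>b \<Longrightarrow> bullet_minus f \<in> G\<^sub>b"
  unfolding bullet_minus_def by (rule bullet_carrier_pointwise[of f G f G f G]) (auto intro: minus_closed)

lemma continuous_bullet_minus: "continuous_map T\<^sub>b T\<^sub>b bullet_minus"
proof (rule continuous_map_into_bullet)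
  show "bullet_minus f \<in> G\<^sub>b" if "f \<in> topspace T\<^sub>b" for f
    using that by (simp add: topspace_bullet_topology bullet_minus_closed)
next
  fix f V \<epsilon>
  assume f: "f \<in> topspace T\<^sub>b" and V: "openin X V" "\<zero> \<in> V" "(\<epsilon>::real) > 0"
  have fG: "f \<in> G\<^sub>b"
    using f topspace_bullet_topology by simp
  define \<Phi> where "\<Phi> = (\<lambda>a (p::'a \<times> 'a). \<ominus> (\<ominus> a) \<oplus> \<ominus> (a \<oplus> fst p))"
  have "continuous_map (prod_topology X X) X (\<Phi> a) \<and> \<Phi> a (\<zero>, \<zero>) \<in> V" if "a \<in> f ` J" for a
  proof -
    have a: "a \<in> G"
      using that fG bullet_carrier_in by blast
    have "continuous_map (prod_topology X X) X (\<Phi> a)"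
      unfolding \<Phi>_def
      by (intro continuous_map_op continuous_map_minus continuous_map_const_point continuous_map_fst
          minus_closed a)
    moreover have "\<Phi> a (\<zero>, \<zero>) = \<zero>"
      unfolding \<Phi>_def using a by (simp add: right_zero left_minus minus_closed)
    ultimately show ?thesis
      using V(2) by simp
  qed
  then have "\<exists>W. openin X W \<and> \<zero> \<in> W \<and> (\<forall>a\<in>f ` J. \<forall>v\<in>W. \<forall>w\<in>W. \<Phi> a (v, w) \<in> V)"
    using bullet_carrier_finite_range[OF fG] V(1) zero_closed topspace_X
    by (intro finite_continuous_maps_pair_nbhd) auto
  then obtain W where W: "openin X W" "\<zero> \<in> W" "\<forall>a\<in>f ` J. \<forall>v\<in>W. \<forall>w\<in>W. \<Phi> a (v, w) \<in> V"
    by blast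
  obtain U where U: "openin T\<^sub>b U" "f \<in> U" "U \<subseteq> bullet_nbhd f W (\<epsilon> / 2)"
    using bullet_nbhd_contains_open[OF fG W(1,2), of "\<epsilon> / 2"] V(3) by auto
  show "\<exists>U. openin T\<^sub>b U \<and> f \<in> U \<and> (\<forall>h\<in>U. bullet_minus h \<in> bullet_nbhd (bullet_minus f) V \<epsilon>)"
  proof (intro exI[of _ U] conjI ballI)
    show "openin T\<^sub>b U" "f \<in> U"
      using U by auto
    fix h
    assume "h \<in> U"
    then have "h \<in> bullet_nbhd f W (\<epsilon> / 2)"
      using U(3) by blast
    then have hG: "h \<in> G\<^sub>b" and hm: "measure lebesgue {r\<in>J. \<ominus> f r \<oplus> h r \<notin> W} < \<epsilon> / 2"
      unfolding mem_bullet_nbhd_iff[OF fG] by blast+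
    have mfG: "bullet_minus f \<in> G\<^sub>b" and mhG: "bullet_minus h \<in> G\<^sub>b"
      using fG hG bullet_minus_closed by blast+
    have "\<ominus> bullet_minus f r \<oplus> bullet_minus h r \<in> V" if "r \<in> J" "\<ominus> f r \<oplus> h r \<in> W" for r
    proof -
      have "\<Phi> (f r) (\<ominus> f r \<oplus> h r, \<ominus> f r \<oplus> h r) \<in> V"
        using W(3) that by blast
      moreover have "f r \<in> G" "h r \<in> G"
        using that(1) fG hG by (simp_all add: bullet_carrier_in)
      ultimately show ?thesis
        using that(1) by (simp add: \<Phi>_def left_cancel_minus bullet_minus_def)
    qed
    then have "measure lebesgue {r\<in>J. \<ominus> bullet_minus f r \<oplus> bullet_minus h r \<notin> V} < \<epsilon>"
      by (intro measure_exceptional_set_less[OF deviation_lmeasurable[OF mfG mhG]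
            deviation_lmeasurable[OF fG hG] deviation_lmeasurable[OF fG hG] _ hm hm]) auto
    then show "bullet_minus h \<in> bullet_nbhd (bullet_minus f) V \<epsilon>"
      using mhG by (simp only: mem_bullet_nbhd_iff[OF mfG])
  qed
qed

lemma const_bullet_mem_bullet_nbhd_iff:
  assumes "x \<in> G" "y \<in> G" "0 < \<epsilon>" "\<epsilon> \<le> 1"
  shows "const_bullet y \<in> bullet_nbhd (const_bullet x) V \<epsilon> \<longleftrightarrow> \<ominus> x \<oplus> y \<in> V"
proof -
  have "{r\<in>J. \<ominus> const_bullet x r \<oplus> const_bullet y r \<notin> V} = (if \<ominus> x \<oplus> y \<in> V then {} else J)"
    by (auto simp: const_bullet_def)
  then show ?thesis
    using assms const_bullet_in_carrier[of y G]
    by (simp add: mem_bullet_nbhd_iff[OF const_bullet_in_carrier[OF assms(1)]])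
qed

lemma continuous_const_bullet: "continuous_map X T\<^sub>b const_bullet"
proof (rule continuous_map_into_bullet)
  show "const_bullet x \<in> G\<^sub>b" if "x \<in> topspace X" for x
    using that by (simp add: topspace_X const_bullet_in_carrier)
next
  fix x V \<epsilon>
  assume x: "x \<in> topspace X" and V: "openin X V" "\<zero> \<in> V" "(\<epsilon>::real) > 0"
  have xG: "x \<in> G"
    using x topspace_X by simp
  define W where "W = {y \<in> topspace X. \<ominus> x \<oplus> y \<in> V}"
  have "continuous_map X X (\<lambda>y. \<ominus> x \<oplus> y)"
    by (intro continuous_map_op continuous_map_const_point minus_closed xG continuous_map_id[unfolded id_def])
  then have "openin X W"
    unfolding W_def using V(1) by (rule openin_continuous_map_preimage)
  moreover have "x \<in> W"
    unfolding W_def using x xG V by (simp add: left_minus)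
  moreover have "const_bullet z \<in> bullet_nbhd (const_bullet x) V \<epsilon>" if "z \<in> W" for z
  proof -
    have "z \<in> G" "\<ominus> x \<oplus> z \<in> V"
      using that topspace_X unfolding W_def by auto
    then have "const_bullet z \<in> bullet_nbhd (const_bullet x) V (min \<epsilon> 1)"
      using const_bullet_mem_bullet_nbhd_iff[OF xG, of z "min \<epsilon> 1" V] V(3) by simp
    then show ?thesis
      using bullet_nbhd_mono[OF const_bullet_in_carrier[OF xG], of V V "min \<epsilon> 1" \<epsilon>] by auto
  qed
  ultimately show "\<exists>W. openin X W \<and> x \<in> W \<and> (\<forall>z\<in>W. const_bullet z \<in> bullet_nbhd (const_bullet x) V \<epsilon>)"
    by blast
qed

lemma t1_space_bullet: "t1_space T\<^sub>b"
  unfolding t1_space_def topspace_bullet_topology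
proof (intro ballI impI)
  fix f g
  assume f: "f \<in> G\<^sub>b" and g: "g \<in> G\<^sub>b" and "f \<noteq> g"
  then obtain r\<^sub>0 where r\<^sub>0: "r\<^sub>0 \<in> J" "f r\<^sub>0 \<noteq> g r\<^sub>0"
    using bullet_carrier_eqI[OF f g] by blast
  define c where "c = \<ominus> f r\<^sub>0 \<oplus> g r\<^sub>0"
  have "c \<in> G" "c \<noteq> \<zero>"
    using r\<^sub>0 f g bullet_carrier_in[of _ G] unfolding c_def
    by (auto simp: op_closed minus_closed minus_op_eq_zero_iff)
  then obtain W where W: "openin X W" "\<zero> \<in> W" "c \<notin> W"
    using t1_space_X zero_closed topspace_X unfolding t1_space_def by metis
  define d where "d = (\<lambda>r. if r \<in> J then \<ominus> f r \<oplus> g r else undefined)"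
  have "step_function d"
    using bullet_gyrodiff_closed[OF f g] unfolding d_def by (simp add: bullet_carrier_iff)
  then obtain t where t: "r\<^sub>0 < t" "t \<le> 1" "\<forall>r\<in>{r\<^sub>0..<t}. d r = d r\<^sub>0"
    by (rule step_function_right_constant[OF _ r\<^sub>0(1)])
  obtain U where U: "openin T\<^sub>b U" "f \<in> U" "U \<subseteq> bullet_nbhd f W (t - r\<^sub>0)"
    using bullet_nbhd_contains_open[OF f W(1,2), of "t - r\<^sub>0"] t by auto
  have "{r\<^sub>0..<t} \<subseteq> J"
    using r\<^sub>0(1) t(2) by auto
  have "g \<notin> bullet_nbhd f W (t - r\<^sub>0)"
  proof
    assume "g \<in> bullet_nbhd f W (t - r\<^sub>0)"
    then have "measure lebesgue {r\<in>J. \<ominus> f r \<oplus> g r \<notin> W} < t - r\<^sub>0"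
      unfolding mem_bullet_nbhd_iff[OF f] by blast
    then obtain r where r: "r \<in> {r\<^sub>0..<t}" "\<ominus> f r \<oplus> g r \<in> W"
      using exists_in_interval_if_exceptional_set_small[OF deviation_lmeasurable[OF f g]]
        \<open>{r\<^sub>0..<t} \<subseteq> J\<close> by blast
    have "d r = d r\<^sub>0"
      by (rule bspec[OF t(3) r(1)])
    then have "\<ominus> f r \<oplus> g r = c"
      using r(1) \<open>{r\<^sub>0..<t} \<subseteq> J\<close> r\<^sub>0(1) by (auto simp: d_def c_def)
    then show False
      using r(2) W(3) by simp
  qed
  then show "\<exists>U. openin T\<^sub>b U \<and> f \<in> U \<and> g \<notin> U"
    using U by blast
qed

section \<open>Paths by truncation\<close>

definition bullet_truncate :: "real \<Rightarrow> (real \<Rightarrow> 'a) \<Rightarrow> (real \<Rightarrow> 'a)" where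
  "bullet_truncate t u = (\<lambda>r. if r \<in> J then if r < t then u r else \<zero> else undefined)"

lemma bullet_truncate_closed: "u \<in> G\<^sub>b \<Longrightarrow> bullet_truncate t u \<in> G\<^sub>b"
  unfolding bullet_carrier_iff bullet_truncate_def
  by (auto intro!: step_function_cong[OF step_function_truncate[of u t \<zero>]] simp: zero_closed)

lemma bullet_truncate_0: "bullet_truncate 0 u = const_bullet \<zero>"
  by (auto simp: bullet_truncate_def const_bullet_def)

lemma bullet_truncate_1: "u \<in> G\<^sub>b \<Longrightarrow> bullet_truncate 1 u = u"
  by (auto simp: bullet_truncate_def bullet_carrier_iff)

text \<open>Sliding the cut point t moves f \<oplus> u\<restriction>[0,t) only on an interval of length |t - s|.\<close>

lemma continuous_bullet_truncate_path:
  assumes f: "f \<in> G\<^sub>b" and u: "u \<in> G\<^sub>b"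
  shows "continuous_map (top_of_set {0..1}) T\<^sub>b (\<lambda>t. f \<oplus>\<^sup>\<bullet> bullet_truncate t u)"
proof (rule continuous_map_into_bullet)
  show "f \<oplus>\<^sup>\<bullet> bullet_truncate t u \<in> G\<^sub>b" for t
    using bullet_op_closed f bullet_truncate_closed u by blast
next
  fix t V \<epsilon>
  assume t: "t \<in> topspace (top_of_set {0..1::real})" and V: "openin X V" "\<zero> \<in> V" "(\<epsilon>::real) > 0"
  show "\<exists>W. openin (top_of_set {0..1}) W \<and> t \<in> W \<and>
      (\<forall>s\<in>W. f \<oplus>\<^sup>\<bullet> bullet_truncate s u \<in> bullet_nbhd (f \<oplus>\<^sup>\<bullet> bullet_truncate t u) V \<epsilon>)"
  proof (intro exI[of _ "{0..1} \<inter> ball t \<epsilon>"] conjI ballI)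
    show "openin (top_of_set {0..1}) ({0..1} \<inter> ball t \<epsilon>)"
      by (rule openin_open_Int) simp
    show "t \<in> {0..1} \<inter> ball t \<epsilon>"
      using t V by simp
    fix s
    assume s: "s \<in> {0..1} \<inter> ball t \<epsilon>"
    define g where "g = f \<oplus>\<^sup>\<bullet> bullet_truncate t u"
    define h where "h = f \<oplus>\<^sup>\<bullet> bullet_truncate s u"
    have gG: "g \<in> G\<^sub>b" and hG: "h \<in> G\<^sub>b"
      unfolding g_def h_def using bullet_op_closed f bullet_truncate_closed u by blast+
    have "{r\<in>J. \<ominus> g r \<oplus> h r \<notin> V} \<subseteq> {min t s..<max t s}"
    proof
      fix r
      assume r: "r \<in> {r\<in>J. \<ominus> g r \<oplus> h r \<notin> V}"
      show "r \<in> {min t s..<max t s}"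
      proof (rule ccontr)
        assume "r \<notin> {min t s..<max t s}"
        then have "(r < t) = (r < s)"
          by auto
        then have "g r = h r"
          using r by (simp add: g_def h_def bullet_op_apply bullet_truncate_def)
        moreover have "h r \<in> G"
          using r hG by (simp add: bullet_carrier_in)
        ultimately show False
          using r V(2) by (simp add: left_minus)
      qed
    qed
    moreover have "{min t s..<max t s} \<in> lmeasurable"
      by (intro bounded_set_imp_lmeasurable) auto
    ultimately have "measure lebesgue {r\<in>J. \<ominus> g r \<oplus> h r \<notin> V} \<le> measure lebesgue {min t s..<max t s}"
      using deviation_lmeasurable[OF gG hG] by (intro measure_mono_fmeasurable) auto
    also have "\<dots> < \<epsilon>"
      using s by (auto simp: dist_real_def)
    finally show "h \<in> bullet_nbhd g V \<epsilon>"
      using hG by (simp only: mem_bullet_nbhd_iff[OF gG])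
  qed
qed

lemma path_component_of_bullet_truncate:
  assumes f: "f \<in> G\<^sub>b" and u: "u \<in> G\<^sub>b" and S: "\<forall>t\<in>{0..1}. f \<oplus>\<^sup>\<bullet> bullet_truncate t u \<in> S"
  shows "path_component_of (subtopology T\<^sub>b S) f (f \<oplus>\<^sup>\<bullet> u)"
  unfolding path_component_of_def
proof (intro exI[of _ "\<lambda>t. f \<oplus>\<^sup>\<bullet> bullet_truncate t u"] conjI)
  show "pathin (subtopology T\<^sub>b S) (\<lambda>t. f \<oplus>\<^sup>\<bullet> bullet_truncate t u)"
    unfolding pathin_def continuous_map_in_subtopology
    using continuous_bullet_truncate_path[OF f u] S by auto
  show "f \<oplus>\<^sup>\<bullet> bullet_truncate 0 u = f"
    using bullet_truncate_0 bullet_op_const_zero[OF f] by simp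
  show "f \<oplus>\<^sup>\<bullet> bullet_truncate 1 u = f \<oplus>\<^sup>\<bullet> u"
    using bullet_truncate_1[OF u] by simp
qed

lemma path_connectedin_bullet_nbhd:
  assumes f: "f \<in> G\<^sub>b" and V: "\<zero> \<in> V"
  shows "path_connectedin T\<^sub>b (bullet_nbhd f V \<epsilon>)"
  unfolding path_connectedin_def
proof
  show "bullet_nbhd f V \<epsilon> \<subseteq> topspace T\<^sub>b"
    using bullet_nbhd_subset[OF f] topspace_bullet_topology by simp
  have from_f: "path_component_of (subtopology T\<^sub>b (bullet_nbhd f V \<epsilon>)) f k"
    if k: "k \<in> bullet_nbhd f V \<epsilon>" for k
  proof -
    obtain u where u: "u \<in> G\<^sub>b" "measure lebesgue {r\<in>J. u r \<notin> V} < \<epsilon>" "k = f \<oplus>\<^sup>\<bullet> u"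
      using k unfolding bullet_O_def by blast
    have "f \<oplus>\<^sup>\<bullet> bullet_truncate t u \<in> bullet_nbhd f V \<epsilon>" for t
    proof -
      have "{r\<in>J. bullet_truncate t u r \<notin> V} \<subseteq> {r\<in>J. u r \<notin> V}"
        using V by (auto simp: bullet_truncate_def)
      then have "measure lebesgue {r\<in>J. bullet_truncate t u r \<notin> V} \<le> measure lebesgue {r\<in>J. u r \<notin> V}"
        using bullet_carrier_level_set_lmeasurable[OF u(1) u(1), of "\<lambda>x y. x \<notin> V"]
          bullet_carrier_level_set_lmeasurable[OF bullet_truncate_closed[OF u(1)]
            bullet_truncate_closed[OF u(1)], of "\<lambda>x y. x \<notin> V" t t]
        by (intro measure_mono_fmeasurable) auto
      then have "bullet_truncate t u \<in> bullet_O G (\<oplus>) V \<epsilon>"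
        unfolding bullet_O_def using u(1,2) bullet_truncate_closed[OF u(1)] by simp
      then show ?thesis
        by blast
    qed
    then show ?thesis
      using path_component_of_bullet_truncate[OF f u(1)] u(3) by blast
  qed
  show "path_connected_space (subtopology T\<^sub>b (bullet_nbhd f V \<epsilon>))"
    unfolding path_connected_space_iff_path_component
  proof (intro ballI)
    fix k l
    assume "k \<in> topspace (subtopology T\<^sub>b (bullet_nbhd f V \<epsilon>))"
      "l \<in> topspace (subtopology T\<^sub>b (bullet_nbhd f V \<epsilon>))"
    then have "k \<in> bullet_nbhd f V \<epsilon>" "l \<in> bullet_nbhd f V \<epsilon>"
      by auto
    then show "path_component_of (subtopology T\<^sub>b (bullet_nbhd f V \<epsilon>)) k l"
      using from_f path_component_of_sym path_component_of_trans by metis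
  qed
qed

lemma path_connected_space_bullet: "path_connected_space T\<^sub>b"
proof -
  have "path_component_of T\<^sub>b (const_bullet \<zero>) k" if "k \<in> G\<^sub>b" for k
    using path_component_of_bullet_truncate[OF const_zero_closed that, of UNIV]
      bullet_const_zero_op[OF that] by simp
  then show ?thesis
    unfolding path_connected_space_iff_path_component topspace_bullet_topology
    using path_component_of_sym path_component_of_trans by metis
qed

lemma locally_path_connected_space_bullet: "locally_path_connected_space T\<^sub>b"
  unfolding locally_path_connected_space_def neighbourhood_base_of
proof (intro allI impI)
  fix U f
  assume "openin T\<^sub>b U \<and> f \<in> U"
  then have "bullet_open U" "f \<in> U"
    using openin_bullet_topology by blast+
  then obtain V \<epsilon> where V: "openin X V" "\<zero> \<in> V" "\<epsilon> > 0" "bullet_nbhd f V \<epsilon> \<subseteq> U"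
    and f: "f \<in> G\<^sub>b"
    unfolding bullet_open_def by blast
  obtain W where "openin T\<^sub>b W" "f \<in> W" "W \<subseteq> bullet_nbhd f V \<epsilon>"
    using bullet_nbhd_contains_open[OF f V(1-3)] by blast
  then show "\<exists>W P. openin T\<^sub>b W \<and> path_connectedin T\<^sub>b P \<and> f \<in> W \<and> W \<subseteq> P \<and> P \<subseteq> U"
    using V path_connectedin_bullet_nbhd[OF f V(2)] by blast
qed

section \<open>The constant functions\<close>

lemma bullet_carrier_non_constant:
  assumes "f \<in> G\<^sub>b" "f \<notin> const_bullet ` G"
  obtains r where "r \<in> J" "f r \<noteq> f 0"
proof -
  have f0: "f 0 \<in> G"
    using assms(1) by (simp add: bullet_carrier_in)
  have "\<exists>r\<in>J. f r \<noteq> f 0"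
  proof (rule ccontr)
    assume const: "\<not> (\<exists>r\<in>J. f r \<noteq> f 0)"
    have "f = const_bullet (f 0)"
    proof (rule bullet_carrier_eqI[OF assms(1) const_bullet_in_carrier[OF f0]])
      fix r
      assume "r \<in> J"
      moreover from this have "f r = f 0"
        using const by blast
      ultimately show "f r = const_bullet (f 0) r"
        by (simp add: const_bullet_def)
    qed
    then have "f \<in> const_bullet ` G"
      by (rule image_eqI[OF _ f0])
    then show False
      using assms(2) by contradiction
  qed
  then obtain r where "r \<in> J" "f r \<noteq> f 0"
    by blast
  then show thesis
    by (rule that)
qed

lemma const_bullet_in_bullet_nbhd_on_interval:
  assumes f: "f \<in> G\<^sub>b" and y: "y \<in> G" and k: "const_bullet y \<in> bullet_nbhd f V \<epsilon>"
    and I: "{s..<t} \<subseteq> J" "\<epsilon> \<le> t - s" and c: "\<forall>r\<in>{s..<t}. f r = c"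
  shows "\<ominus> c \<oplus> y \<in> V"
proof -
  have "measure lebesgue {r\<in>J. \<ominus> f r \<oplus> const_bullet y r \<notin> V} < \<epsilon>"
    using k unfolding mem_bullet_nbhd_iff[OF f] by blast
  then have "measure lebesgue {r\<in>J. \<ominus> f r \<oplus> const_bullet y r \<notin> V} < t - s"
    using I(2) by linarith
  then obtain r where r: "r \<in> {s..<t}" "\<ominus> f r \<oplus> const_bullet y r \<in> V"
    using exists_in_interval_if_exceptional_set_small[OF
        deviation_lmeasurable[OF f const_bullet_in_carrier[OF y]] _ I(1)] by blast
  moreover have "r \<in> J"
    using r(1) I(1) by blast
  moreover have "f r = c"
    by (rule bspec[OF c r(1)])
  ultimately show ?thesis
    by (simp add: const_bullet_def)
qed

text \<open>If f takes the values a \<noteq> b on intervals I and I', a constant y close to f off a set of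
  measure less than both lengths has \<ominus>a \<oplus> y and \<ominus>b \<oplus> y close to \<zero>. The continuous map
  \<Theta>(v,w) = \<ominus>w \<oplus> (\<ominus>b \<oplus> (a \<oplus> v)) sends this pair to \<zero> but (\<zero>,\<zero>) to \<ominus>b \<oplus> a \<noteq> \<zero>,
  which T1 separates from \<zero>.\<close>

lemma bullet_nbhd_avoids_constants:
  assumes f: "f \<in> G\<^sub>b" "f \<notin> const_bullet ` G"
  shows "\<exists>V \<epsilon>. openin X V \<and> \<zero> \<in> V \<and> \<epsilon> > 0 \<and> bullet_nbhd f V \<epsilon> \<inter> const_bullet ` G = {}"
proof -
  obtain r\<^sub>1 where r\<^sub>1: "r\<^sub>1 \<in> J" "f r\<^sub>1 \<noteq> f 0"
    using bullet_carrier_non_constant[OF f] by blast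
  define a where "a = f r\<^sub>1"
  define b where "b = f 0"
  have ab: "a \<in> G" "b \<in> G" "a \<noteq> b"
    using f(1) r\<^sub>1 unfolding a_def b_def by (auto simp: bullet_carrier_in)
  have "step_function f"
    using f(1) by (simp add: bullet_carrier_iff)
  obtain t\<^sub>1 where t\<^sub>1: "r\<^sub>1 < t\<^sub>1" "t\<^sub>1 \<le> 1" "\<forall>r\<in>{r\<^sub>1..<t\<^sub>1}. f r = a"
    unfolding a_def by (rule step_function_right_constant[OF \<open>step_function f\<close> r\<^sub>1(1)])
  have "(0::real) \<in> J"
    by simp
  obtain t\<^sub>0 where t\<^sub>0: "0 < t\<^sub>0" "t\<^sub>0 \<le> 1" "\<forall>r\<in>{0..<t\<^sub>0}. f r = b"
    unfolding b_def by (rule step_function_right_constant[OF \<open>step_function f\<close> \<open>0 \<in> J\<close>])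
  define \<Theta> where "\<Theta> = (\<lambda>p. \<ominus> snd p \<oplus> (\<ominus> b \<oplus> (a \<oplus> fst p)))"
  have "\<ominus> b \<oplus> a \<in> G" "\<ominus> b \<oplus> a \<noteq> \<zero>"
    using ab by (simp_all add: op_closed minus_closed minus_op_eq_zero_iff)
  then obtain W where W: "openin X W" "\<ominus> b \<oplus> a \<in> W" "\<zero> \<notin> W"
    using t1_space_X zero_closed topspace_X unfolding t1_space_def by metis
  have "continuous_map (prod_topology X X) X \<Theta>"
    unfolding \<Theta>_def
    by (intro continuous_map_op continuous_map_minus continuous_map_const_point continuous_map_fst
        continuous_map_snd minus_closed ab)
  moreover have "\<Theta> (\<zero>, \<zero>) = \<ominus> b \<oplus> a"
    unfolding \<Theta>_def using ab by (simp add: minus_zero left_zero right_zero op_closed minus_closed)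
  ultimately have "\<exists>V. openin X V \<and> \<zero> \<in> V \<and> (\<forall>v\<in>V. \<forall>w\<in>V. \<Theta> (v, w) \<in> W)"
    using W(1,2) zero_closed topspace_X by (intro continuous_map_pair_nbhd) simp_all
  then obtain V where V: "openin X V" "\<zero> \<in> V" "\<forall>v\<in>V. \<forall>w\<in>V. \<Theta> (v, w) \<in> W"
    by blast
  define \<epsilon> where "\<epsilon> = min (t\<^sub>1 - r\<^sub>1) t\<^sub>0"
  have avoid: "const_bullet y \<notin> bullet_nbhd f V \<epsilon>" if y: "y \<in> G" for y
  proof
    assume k: "const_bullet y \<in> bullet_nbhd f V \<epsilon>"
    have "\<ominus> a \<oplus> y \<in> V"
      using const_bullet_in_bullet_nbhd_on_interval[OF f(1) y k _ _ t\<^sub>1(3)] r\<^sub>1(1) t\<^sub>1(2)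
      unfolding \<epsilon>_def by auto
    moreover have "\<ominus> b \<oplus> y \<in> V"
      using const_bullet_in_bullet_nbhd_on_interval[OF f(1) y k _ _ t\<^sub>0(3)] t\<^sub>0(2)
      unfolding \<epsilon>_def by auto
    ultimately have "\<Theta> (\<ominus> a \<oplus> y, \<ominus> b \<oplus> y) \<in> W"
      by (rule V(3)[rule_format])
    moreover have "\<Theta> (\<ominus> a \<oplus> y, \<ominus> b \<oplus> y) = \<zero>"
      unfolding \<Theta>_def using ab y by (simp add: left_cancel_minus left_minus op_closed minus_closed)
    ultimately show False
      using W(3) by simp
  qed
  have "bullet_nbhd f V \<epsilon> \<inter> const_bullet ` G = {}"
  proof (rule equals0I)
    fix k
    assume "k \<in> bullet_nbhd f V \<epsilon> \<inter> const_bullet ` G"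
    then have "k \<in> bullet_nbhd f V \<epsilon>" "k \<in> const_bullet ` G"
      by (rule IntD1, rule IntD2)
    from \<open>k \<in> const_bullet ` G\<close> obtain y where "y \<in> G" "k = const_bullet y"
      by (rule imageE)
    then show False
      using avoid \<open>k \<in> bullet_nbhd f V \<epsilon>\<close> by simp
  qed
  moreover have "\<epsilon> > 0"
    unfolding \<epsilon>_def using t\<^sub>1 t\<^sub>0 by simp
  ultimately show ?thesis
    using V(1,2) by (intro exI[of _ V] exI[of _ \<epsilon>]) simp
qed

lemma const_bullet_image_subset: "const_bullet ` G \<subseteq> G\<^sub>b"
  by (rule image_subsetI) (rule const_bullet_in_carrier)

lemma closedin_const_bullet_image: "closedin T\<^sub>b (const_bullet ` G)"
  unfolding closedin_def topspace_bullet_topology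
proof
  show "const_bullet ` G \<subseteq> G\<^sub>b"
    by (rule const_bullet_image_subset)
  have "bullet_open (G\<^sub>b - const_bullet ` G)"
    unfolding bullet_open_def
  proof (intro conjI ballI)
    fix f
    assume "f \<in> G\<^sub>b - const_bullet ` G"
    then have f: "f \<in> G\<^sub>b" "f \<notin> const_bullet ` G"
      by simp_all
    obtain V \<epsilon> where "openin X V" "\<zero> \<in> V" "\<epsilon> > 0"
        "bullet_nbhd f V \<epsilon> \<inter> const_bullet ` G = {}"
      using bullet_nbhd_avoids_constants[OF f] by (elim exE conjE)
    moreover have "N \<subseteq> G\<^sub>b - const_bullet ` G" if "N \<subseteq> G\<^sub>b" "N \<inter> const_bullet ` G = {}" for N
      using that by blast
    ultimately show "\<exists>V \<epsilon>. openin X V \<and> \<zero> \<in> V \<and> \<epsilon> > 0 \<and> bullet_nbhd f V \<epsilon> \<subseteq> G\<^sub>b - const_bullet ` G"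
      using bullet_nbhd_subset[OF f(1)] by (intro exI[of _ V] exI[of _ \<epsilon>]) simp
  qed simp
  then show "openin T\<^sub>b (G\<^sub>b - const_bullet ` G)"
    using openin_bullet_topology by blast
qed

lemma inj_on_const_bullet: "inj_on const_bullet A"
proof
  fix x y
  assume "const_bullet x = const_bullet y"
  then have "const_bullet x 0 = const_bullet y 0"
    by simp
  then show "x = y"
    by (simp add: const_bullet_def)
qed

lemma homeomorphic_map_const_bullet: "homeomorphic_map X (subtopology T\<^sub>b (const_bullet ` G)) const_bullet"
proof (rule bijective_open_imp_homeomorphic_map)
  show "continuous_map X (subtopology T\<^sub>b (const_bullet ` G)) const_bullet"
    unfolding continuous_map_in_subtopology using continuous_const_bullet topspace_X by simp
  show "const_bullet ` topspace X = topspace (subtopology T\<^sub>b (const_bullet ` G))"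
    using const_bullet_image_subset by (simp add: topspace_X topspace_bullet_topology Int_absorb1)
  show "inj_on const_bullet (topspace X)"
    by (rule inj_on_const_bullet)
  show "open_map X (subtopology T\<^sub>b (const_bullet ` G)) const_bullet"
    unfolding open_map_def
  proof (intro allI impI)
    fix U
    assume U: "openin X U"
    then have UG: "U \<subseteq> G"
      using openin_subset topspace_X by blast
    define V where "V x = {v \<in> topspace X. x \<oplus> v \<in> U}" for x
    have "\<exists>N. openin T\<^sub>b N \<and> const_bullet x \<in> N \<and> N \<subseteq> bullet_nbhd (const_bullet x) (V x) 1"
      if "x \<in> U" for x
    proof -
      have xG: "x \<in> G"
        using that UG by blast
      have "continuous_map X X (\<lambda>v. x \<oplus> v)"
        by (intro continuous_map_op continuous_map_const_point xG continuous_map_id[unfolded id_def])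
      then have "openin X (V x)"
        unfolding V_def using U by (rule openin_continuous_map_preimage)
      moreover have "\<zero> \<in> V x"
        unfolding V_def using that xG zero_closed topspace_X by (simp add: right_zero)
      ultimately show ?thesis
        using bullet_nbhd_contains_open[OF const_bullet_in_carrier[OF xG]] by simp
    qed
    then obtain N where N: "\<And>x. x \<in> U \<Longrightarrow> openin T\<^sub>b (N x) \<and> const_bullet x \<in> N x \<and>
        N x \<subseteq> bullet_nbhd (const_bullet x) (V x) 1"
      by metis
    have "const_bullet ` U = (\<Union>x\<in>U. N x) \<inter> const_bullet ` G"
    proof
      show "const_bullet ` U \<subseteq> (\<Union>x\<in>U. N x) \<inter> const_bullet ` G"
      proof (rule image_subsetI)
        fix x
        assume "x \<in> U"
        then show "const_bullet x \<in> (\<Union>x\<in>U. N x) \<inter> const_bullet ` G"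
          using N[of x] UG by auto
      qed
      show "(\<Union>x\<in>U. N x) \<inter> const_bullet ` G \<subseteq> const_bullet ` U"
      proof
        fix k
        assume k: "k \<in> (\<Union>x\<in>U. N x) \<inter> const_bullet ` G"
        then obtain x where "x \<in> U" "k \<in> N x"
          by auto
        moreover obtain y where "y \<in> G" "k = const_bullet y"
          using k by auto
        ultimately have xy: "x \<in> U" "k \<in> N x" "y \<in> G" "k = const_bullet y"
          by simp_all
        have xG: "x \<in> G"
          using xy UG by blast
        have "const_bullet y \<in> bullet_nbhd (const_bullet x) (V x) 1"
          using N[OF xy(1)] xy(2,4) by blast
        then have "\<ominus> x \<oplus> y \<in> V x"
          using const_bullet_mem_bullet_nbhd_iff[OF xG xy(3)] by simp
        then have "y \<in> U"
          using left_cancel_minus[OF xG xy(3)] unfolding V_def by simp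
        then show "k \<in> const_bullet ` U"
          using xy(4) by simp
      qed
    qed
    moreover have "openin T\<^sub>b (\<Union>x\<in>U. N x)"
      using N by blast
    ultimately show "openin (subtopology T\<^sub>b (const_bullet ` G)) (const_bullet ` U)"
      unfolding openin_subtopology by blast
  qed
qed

end

section \<open>The gyrogroup structure of step functions\<close>

lemma fun_eq_on_J_outside_undefined:
  assumes "\<And>r. r \<in> J \<Longrightarrow> f r = g r" "\<And>r. r \<notin> J \<Longrightarrow> f r = undefined" "\<And>r. r \<notin> J \<Longrightarrow> g r = undefined"
  shows "f = g"
proof
  fix r
  show "f r = g r"
    using assms by (cases "r \<in> J") simp_all
qed

context topological_gyrogroup_on
begin

definition bullet_gyr :: "(real \<Rightarrow> 'a) \<Rightarrow> (real \<Rightarrow> 'a) \<Rightarrow> (real \<Rightarrow> 'a) \<Rightarrow> (real \<Rightarrow> 'a)" where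
  "bullet_gyr f g h = (\<lambda>r. if r \<in> J then gyr (f r) (g r) (h r) else undefined)"

lemma bullet_gyr_closed: "f \<in> G\<^sub>b \<Longrightarrow> g \<in> G\<^sub>b \<Longrightarrow> h \<in> G\<^sub>b \<Longrightarrow> bullet_gyr f g h \<in> G\<^sub>b"
  unfolding bullet_gyr_def by (rule bullet_carrier_pointwise) (auto intro: gyr_closed)

lemma bullet_zero:
  "const_bullet \<zero> \<in> G\<^sub>b \<and> (\<forall>f\<in>G\<^sub>b. const_bullet \<zero> \<oplus>\<^sup>\<bullet> f = f \<and> f \<oplus>\<^sup>\<bullet> const_bullet \<zero> = f)"
  using const_zero_closed bullet_const_zero_op bullet_op_const_zero by blast

lemma ex1_bullet_zero: "\<exists>!e. e \<in> G\<^sub>b \<and> (\<forall>f\<in>G\<^sub>b. e \<oplus>\<^sup>\<bullet> f = f \<and> f \<oplus>\<^sup>\<bullet> e = f)"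
proof (rule ex1I[of _ "const_bullet \<zero>"])
  fix e
  assume e: "e \<in> G\<^sub>b \<and> (\<forall>f\<in>G\<^sub>b. e \<oplus>\<^sup>\<bullet> f = f \<and> f \<oplus>\<^sup>\<bullet> e = f)"
  then have "e \<oplus>\<^sup>\<bullet> const_bullet \<zero> = const_bullet \<zero>"
    using const_zero_closed by blast
  then show "e = const_bullet \<zero>"
    using bullet_op_const_zero e by simp
qed (rule bullet_zero)

lemma gzero_bullet: "gzero G\<^sub>b (\<oplus>\<^sup>\<bullet>) = const_bullet \<zero>"
  by (subst gzero_def[of G\<^sub>b]) (rule the1_equality[OF ex1_bullet_zero], rule bullet_zero)

lemma bullet_minus_op: "f \<in> G\<^sub>b \<Longrightarrow> bullet_minus f \<oplus>\<^sup>\<bullet> f = const_bullet \<zero>"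
  and bullet_op_minus: "f \<in> G\<^sub>b \<Longrightarrow> f \<oplus>\<^sup>\<bullet> bullet_minus f = const_bullet \<zero>"
  by (intro fun_eq_on_J_outside_undefined; simp add: bullet_op_def bullet_minus_def const_bullet_def
      left_minus right_minus bullet_carrier_in del: atLeastLessThan_iff)+

lemma ex1_bullet_minus:
  assumes f: "f \<in> G\<^sub>b"
  shows "\<exists>!g. g \<in> G\<^sub>b \<and> g \<oplus>\<^sup>\<bullet> f = const_bullet \<zero> \<and> f \<oplus>\<^sup>\<bullet> g = const_bullet \<zero>"
proof (rule ex1I[of _ "bullet_minus f"])
  show "bullet_minus f \<in> G\<^sub>b \<and> bullet_minus f \<oplus>\<^sup>\<bullet> f = const_bullet \<zero> \<and> f \<oplus>\<^sup>\<bullet> bullet_minus f = const_bullet \<zero>"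
    using bullet_minus_closed bullet_minus_op bullet_op_minus f by blast
  fix g
  assume g: "g \<in> G\<^sub>b \<and> g \<oplus>\<^sup>\<bullet> f = const_bullet \<zero> \<and> f \<oplus>\<^sup>\<bullet> g = const_bullet \<zero>"
  show "g = bullet_minus f"
  proof (rule bullet_carrier_eqI[of g G _ G])
    show "g \<in> G\<^sub>b" "bullet_minus f \<in> G\<^sub>b"
      using g bullet_minus_closed[OF f] by simp_all
    fix r
    assume r: "r \<in> J"
    have "(g \<oplus>\<^sup>\<bullet> f) r = const_bullet \<zero> r" "(f \<oplus>\<^sup>\<bullet> g) r = const_bullet \<zero> r"
      using g by simp_all
    then have "g r \<oplus> f r = \<zero>" "f r \<oplus> g r = \<zero>"
      using r by (simp_all add: const_bullet_def bullet_op_apply)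
    then have "\<ominus> f r = g r"
      using minus_unique f g r by (simp add: bullet_carrier_in)
    then show "g r = bullet_minus f r"
      using r by (simp add: bullet_minus_def)
  qed
qed

lemma bullet_gyr_automorphism:
  assumes f: "f \<in> G\<^sub>b" and g: "g \<in> G\<^sub>b"
  shows "gyro_automorphism G\<^sub>b (\<oplus>\<^sup>\<bullet>) (bullet_gyr f g)"
  unfolding gyro_automorphism_def bij_betw_def
proof (intro conjI ballI)
  have fg: "f r \<in> G" "g r \<in> G" if "r \<in> J" for r
    using f g that by (simp_all add: bullet_carrier_in)
  show "inj_on (bullet_gyr f g) G\<^sub>b"
  proof (rule inj_onI)
    fix h k
    assume hk: "h \<in> G\<^sub>b" "k \<in> G\<^sub>b" "bullet_gyr f g h = bullet_gyr f g k"
    show "h = k"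
    proof (rule bullet_carrier_eqI[OF hk(1,2)])
      fix r
      assume r: "r \<in> J"
      have "gyr (f r) (g r) (h r) = gyr (f r) (g r) (k r)"
        using fun_cong[OF hk(3), of r] r by (simp add: bullet_gyr_def)
      then show "h r = k r"
        using gyr_inj_on[OF fg[OF r]] hk(1,2) r unfolding inj_on_def by (simp add: bullet_carrier_in)
    qed
  qed
  show "bullet_gyr f g ` G\<^sub>b = G\<^sub>b"
  proof
    show "bullet_gyr f g ` G\<^sub>b \<subseteq> G\<^sub>b"
      using bullet_gyr_closed f g by blast
    show "G\<^sub>b \<subseteq> bullet_gyr f g ` G\<^sub>b"
    proof
      fix k
      assume k: "k \<in> G\<^sub>b"
      define h where "h = (\<lambda>r. if r \<in> J then inv_into G (gyr (f r) (g r)) (k r) else undefined)"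
      have "h \<in> G\<^sub>b"
        unfolding h_def
        by (rule bullet_carrier_pointwise[OF f g k]) (metis gyr_image inv_into_into)
      moreover have "bullet_gyr f g h = k"
      proof (rule bullet_carrier_eqI[OF bullet_gyr_closed[OF f g \<open>h \<in> G\<^sub>b\<close>] k])
        fix r
        assume r: "r \<in> J"
        have "k r \<in> gyr (f r) (g r) ` G"
          using gyr_image[OF fg[OF r]] k r by (simp add: bullet_carrier_in)
        then show "bullet_gyr f g h r = k r"
          using r by (simp add: bullet_gyr_def h_def f_inv_into_f)
      qed
      ultimately show "k \<in> bullet_gyr f g ` G\<^sub>b"
        by blast
    qed
  qed
  fix h k
  assume "h \<in> G\<^sub>b" "k \<in> G\<^sub>b"
  then show "bullet_gyr f g (h \<oplus>\<^sup>\<bullet> k) = bullet_gyr f g h \<oplus>\<^sup>\<bullet> bullet_gyr f g k"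
    using fg by (intro fun_eq_on_J_outside_undefined)
      (simp_all add: bullet_gyr_def bullet_op_def gyr_op bullet_carrier_in del: atLeastLessThan_iff)
qed

lemma gyrogroup_with_bullet: "gyrogroup_with G\<^sub>b (\<oplus>\<^sup>\<bullet>) bullet_gyr"
  unfolding gyrogroup_with_def gzero_bullet
proof (intro conjI ballI)
  fix f g h
  assume fgh: "f \<in> G\<^sub>b" "g \<in> G\<^sub>b" "h \<in> G\<^sub>b"
  show "f \<oplus>\<^sup>\<bullet> (g \<oplus>\<^sup>\<bullet> h) = f \<oplus>\<^sup>\<bullet> g \<oplus>\<^sup>\<bullet> bullet_gyr f g h"
    using fgh by (intro fun_eq_on_J_outside_undefined)
      (simp_all add: bullet_gyr_def bullet_op_def left_gyroassoc bullet_carrier_in del: atLeastLessThan_iff)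
  show "bullet_gyr (f \<oplus>\<^sup>\<bullet> g) g h = bullet_gyr f g h"
    using fgh by (intro fun_eq_on_J_outside_undefined)
      (simp_all add: bullet_gyr_def bullet_op_def left_loop bullet_carrier_in del: atLeastLessThan_iff)
qed (use bullet_op_closed ex1_bullet_zero ex1_bullet_minus bullet_gyr_automorphism in auto)

lemma ginv_bullet: "f \<in> G\<^sub>b \<Longrightarrow> ginv G\<^sub>b (\<oplus>\<^sup>\<bullet>) f = bullet_minus f"
proof -
  assume f: "f \<in> G\<^sub>b"
  interpret bullet: gyrogroup_on G\<^sub>b "(\<oplus>\<^sup>\<bullet>)" bullet_gyr
    by (rule gyrogroup_on.intro[OF gyrogroup_with_bullet])
  show ?thesis
    using bullet.minus_unique[OF f bullet_minus_closed[OF f]] bullet_minus_op[OF f] bullet_op_minus[OF f]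
    by (simp add: gzero_bullet)
qed

lemma topological_gyrogroup_bullet: "topological_gyrogroup G\<^sub>b (\<oplus>\<^sup>\<bullet>) T\<^sub>b"
  unfolding topological_gyrogroup_def
proof (intro conjI)
  show "gyrogroup G\<^sub>b (\<oplus>\<^sup>\<bullet>)"
    unfolding gyrogroup_def using gyrogroup_with_bullet by blast
  show "continuous_map T\<^sub>b T\<^sub>b (ginv G\<^sub>b (\<oplus>\<^sup>\<bullet>))"
    by (rule continuous_map_eq[OF continuous_bullet_minus]) (simp add: topspace_bullet_topology ginv_bullet)
qed (simp_all add: topspace_bullet_topology t1_space_bullet continuous_bullet_op)

lemma const_bullet_op: "const_bullet (x \<oplus> y) = const_bullet x \<oplus>\<^sup>\<bullet> const_bullet y"
  by (rule ext) (simp add: bullet_op_def const_bullet_def)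

lemma subgyrogroup_const_bullet_image: "subgyrogroup (const_bullet ` G) G\<^sub>b (\<oplus>\<^sup>\<bullet>)"
proof -
  interpret bullet: gyrogroup_on G\<^sub>b "(\<oplus>\<^sup>\<bullet>)" bullet_gyr
    by (rule gyrogroup_on.intro[OF gyrogroup_with_bullet])
  let ?H = "const_bullet ` G"
  have op_H: "f \<oplus>\<^sup>\<bullet> g \<in> ?H" if "f \<in> ?H" "g \<in> ?H" for f g
    using that const_bullet_op[symmetric] op_closed by auto
  have gyr_const: "bullet_gyr (const_bullet a) (const_bullet b) (const_bullet c) = const_bullet (gyr a b c)"
    for a b c
    by (rule ext) (simp add: bullet_gyr_def const_bullet_def)
  have minus_const: "bullet_minus (const_bullet a) = const_bullet (\<ominus> a)" for a
    by (rule ext) (simp add: bullet_minus_def const_bullet_def)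
  have "gyrogroup_with ?H (\<oplus>\<^sup>\<bullet>) bullet_gyr"
  proof (rule bullet.gyrogroup_with_subset)
    show "?H \<subseteq> G\<^sub>b"
      by (rule const_bullet_image_subset)
    show "gzero G\<^sub>b (\<oplus>\<^sup>\<bullet>) \<in> ?H"
      using gzero_bullet zero_closed by simp
    show "f \<oplus>\<^sup>\<bullet> g \<in> ?H" if "f \<in> ?H" "g \<in> ?H" for f g
      using op_H that by blast
    show "ginv G\<^sub>b (\<oplus>\<^sup>\<bullet>) f \<in> ?H" if "f \<in> ?H" for f
    proof -
      obtain a where a: "a \<in> G" "f = const_bullet a"
        using \<open>f \<in> ?H\<close> by (rule imageE) simp
      then have "ginv G\<^sub>b (\<oplus>\<^sup>\<bullet>) f = const_bullet (\<ominus> a)"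
        by (simp add: ginv_bullet const_bullet_in_carrier minus_const)
      then show ?thesis
        using minus_closed[OF a(1)] by (simp add: rev_image_eqI)
    qed
    show "bullet_gyr f g ` ?H = ?H" if fg: "f \<in> ?H" "g \<in> ?H" for f g
    proof -
      obtain a where a: "a \<in> G" "f = const_bullet a"
        using fg(1) by (rule imageE) simp
      obtain b where b: "b \<in> G" "g = const_bullet b"
        using fg(2) by (rule imageE) simp
      have ab: "a \<in> G" "b \<in> G" "f = const_bullet a" "g = const_bullet b"
        using a b by simp_all
      have "bullet_gyr f g ` ?H = const_bullet ` gyr a b ` G"
        unfolding ab(3,4) image_image gyr_const ..
      then show ?thesis
        using gyr_image[OF ab(1,2)] by simp
    qed
  qed
  then interpret H: gyrogroup_on ?H "(\<oplus>\<^sup>\<bullet>)" bullet_gyr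
    by (rule gyrogroup_on.intro)
  show ?thesis
    unfolding subgyrogroup_def
  proof (intro conjI allI impI ballI)
    show "?H \<noteq> {}"
      using zero_closed by auto
    show "?H \<subseteq> G\<^sub>b"
      by (rule const_bullet_image_subset)
    show "gyrogroup ?H (\<oplus>\<^sup>\<bullet>)"
      unfolding gyrogroup_def using H.gyrogroup_with by blast
    fix gyr' f g
    assume gyr': "gyrogroup_with G\<^sub>b (\<oplus>\<^sup>\<bullet>) gyr'" and fg: "f \<in> ?H" "g \<in> ?H"
    interpret bullet': gyrogroup_on G\<^sub>b "(\<oplus>\<^sup>\<bullet>)" gyr'
      by (rule gyrogroup_on.intro[OF gyr'])
    have fg': "f \<in> G\<^sub>b" "g \<in> G\<^sub>b"
      using subsetD[OF const_bullet_image_subset] fg by simp_all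
    have "bullet_gyr f g h = gyr' f g h" if "h \<in> ?H" for h
      using subsetD[OF const_bullet_image_subset that] fg'
      by (simp add: bullet.gyr_eq bullet'.gyr_eq)
    then show "gyro_automorphism ?H (\<oplus>\<^sup>\<bullet>) (gyr' f g)"
      by (rule gyro_automorphism_cong[OF H.gyr_automorphism[OF fg]]) (auto intro: op_H)
  qed
qed

end

theorem mainTheorem5:
  fixes G :: "'a set" and op :: "'a \<Rightarrow> 'a \<Rightarrow> 'a" and X :: "'a topology"
  assumes "topological_gyrogroup G op X"
  shows "const_bullet ` G \<subseteq> bullet_carrier G
    \<and> inj_on const_bullet G
    \<and> (\<forall>x\<in>G. \<forall>y\<in>G. const_bullet (op x y) = bullet_op op (const_bullet x) (const_bullet y))
    \<and> homeomorphic_map X (subtopology (bullet_topology G op X) (const_bullet ` G)) const_bullet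
    \<and> topological_gyrogroup (bullet_carrier G) (bullet_op op) (bullet_topology G op X)
    \<and> path_connected_space (bullet_topology G op X)
    \<and> locally_path_connected_space (bullet_topology G op X)
    \<and> closedin (bullet_topology G op X) (const_bullet ` G)
    \<and> subgyrogroup (const_bullet ` G) (bullet_carrier G) (bullet_op op)"
proof -
  obtain gyr where "gyrogroup_with G op gyr"
    using assms unfolding topological_gyrogroup_def gyrogroup_def by blast
  then interpret topological_gyrogroup_on G op gyr X
    using assms by (intro topological_gyrogroup_on.intro gyrogroup_on.intro topological_gyrogroup_on_axioms.intro)
  show ?thesis
    by (intro conjI ballI const_bullet_image_subset inj_on_const_bullet const_bullet_op
        homeomorphic_map_const_bullet topological_gyrogroup_bullet path_connected_space_bullet
        locally_path_connected_space_bullet closedin_const_bullet_image subgyrogroup_const_bullet_image)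
qed

end
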